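(* Let $\mathcal D$ be a positively oriented Descartes configuration and let $\mathbb D(\mathcal P)$ be the set of all ordered, oriented Descartes configurations whose underlying unordered, unoriented configuration is the underlying configuration of some member of $\mathcal F(\mathcal D)$. Then $\mathbb D(\mathcal P)$ is invariant under the Apollonian group $\mathcal A$ acting by $\mathbf W_{\mathcal D'}\mapsto\mathbf U\mathbf W_{\mathcal D'}$, and it is the union of exactly $48$ orbits of $\mathcal A$; each of these orbits contains exactly one ordered, oriented representative of each unordered, unoriented Descartes configuration underlying a member of $\mathcal F(\mathcal D)$.
   Context: Oriented circles/lines, oriented curvature ($\pm1/r$, $+$ iff interior is the bounded disk; lines curvature $0$, interior the half-plane the unit normal points into). A Descartes configuration: four mutually tangent circles/lines with six distinct tangency points; oriented if interiors pairwise disjoint or so after reversing all orientations; positively oriented if interiors pairwise disjoint. Replacement: in an oriented Descartes configuration, a circle $C_i$ may be replaced by the unique other circle tangent to the remaining three at new points, oriented so the result is an oriented Descartes configuration; $\mathcal F(\mathcal D)$ is the set of configurations obtained from $\mathcal D$ by finitely many replacements. Augmented curvature-center coordinates: for center $\mathbf c$, oriented radius $r$: $\mathbf w(C)=((|\mathbf c|^2-r^2)/r,1/r,c_1/r,c_2/r)$; for the line $\mathbf x\cdot\mathbf h=m$ with interior-pointing unit normal $\mathbf h$: $(2m,0,h_1,h_2)$. $\mathbf W_{\mathcal D}$ has rows $\mathbf w(C_k)$. Known fact: $\mathcal D\mapsto\mathbf W_{\mathcal D}$ is a bijection from ordered, oriented Descartes configurations onto $\{\mathbf W:\mathbf W^T\mathbf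 Q_D\mathbf W=\mathbf Q_W\}$, with $\mathbf Q_D=\mathbf I-\frac12\mathbf 1\mathbf 1^T$, $\mathbf Q_W=\begin{pmatrix}0&-4&0&0\\-4&0&0&0\\0&0&2&0\\0&0&0&2\end{pmatrix}$; so any $\mathbf U$ with $\mathbf U^T\mathbf Q_D\mathbf U=\mathbf Q_D$ acts on ordered, oriented Descartes configurations. The Apollonian group is $\mathcal A=\langle\mathbf S_1,\mathbf S_2,\mathbf S_3,\mathbf S_4\rangle$, where $\mathbf S_i$ agrees with the $4\times4$ identity except in row $i$, which has $-1$ in position $i$ and $2$ in the other three positions (e.g. $\mathbf S_1$ has first row $(-1,2,2,2)$). *)

theory Defs
  imports "HOL-Analysis.Analysis"
begin

text \<open>OCirc c r : circle with centre c and oriented (signed) radius r; r > 0 iff the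
              interior is the bounded open disk.
  OLine h m : the line {x. h . x = m} with unit normal h pointing into the interior.\<close>

datatype ocircle = OCirc "real^2" real | OLine "real^2" real

fun valid_oc :: "ocircle \<Rightarrow> bool" where
  "valid_oc (OCirc c r) \<longleftrightarrow> r \<noteq> 0"
| "valid_oc (OLine h m) \<longleftrightarrow> norm h = 1"

fun is_line :: "ocircle \<Rightarrow> bool" where
  "is_line (OCirc c r) = False"
| "is_line (OLine h m) = True"

fun supp :: "ocircle \<Rightarrow> (real^2) set" where
  "supp (OCirc c r) = sphere c \<bar>r\<bar>"
| "supp (OLine h m) = {x. h \<bullet> x = m}"

fun oint :: "ocircle \<Rightarrow> (real^2) set" where
  "oint (OCirc c r) = (if r > 0 then ball c r else - cball c (- r))"
| "oint (OLine h m) = {x. h \<bullet> x > m}"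

fun orev :: "ocircle \<Rightarrow> ocircle" where
  "orev (OCirc c r) = OCirc c (- r)"
| "orev (OLine h m) = OLine (- h) (- m)"

text \<open>Tangency with tangency point in the extended plane (None = point at infinity):
  two lines are tangent (at infinity) iff they are distinct and parallel, i.e. disjoint;
  otherwise two circles/lines are tangent iff they meet in exactly one point.\<close>
definition tangent_at :: "ocircle \<Rightarrow> ocircle \<Rightarrow> (real^2) option \<Rightarrow> bool" where
  "tangent_at C C' p \<longleftrightarrow>
     (is_line C \<and> is_line C' \<and> supp C \<inter> supp C' = {} \<and> p = None) \<or>
     (\<not> (is_line C \<and> is_line C') \<and> (\<exists>q. supp C \<inter> supp C' = {q} \<and> p = Some q))"

type_synonym config = "4 \<Rightarrow> ocircle"

definition descartes :: "config \<Rightarrow> bool" where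
  "descartes D \<longleftrightarrow> (\<forall>k. valid_oc (D k)) \<and>
     (\<exists>P :: 4 \<Rightarrow> 4 \<Rightarrow> (real^2) option.
        (\<forall>i j. i \<noteq> j \<longrightarrow> tangent_at (D i) (D j) (P i j)) \<and>
        (\<forall>i j k l. i \<noteq> j \<longrightarrow> k \<noteq> l \<longrightarrow> P i j = P k l \<longrightarrow> {i, j} = {k, l}))"

definition pairwise_disjoint_interiors :: "config \<Rightarrow> bool" where
  "pairwise_disjoint_interiors D \<longleftrightarrow> (\<forall>i j. i \<noteq> j \<longrightarrow> oint (D i) \<inter> oint (D j) = {})"

definition oriented_descartes :: "config \<Rightarrow> bool" where
  "oriented_descartes D \<longleftrightarrow> descartes D \<and>
     (pairwise_disjoint_interiors D \<or> pairwise_disjoint_interiors (orev \<circ> D))"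

definition positively_oriented :: "config \<Rightarrow> bool" where
  "positively_oriented D \<longleftrightarrow> descartes D \<and> pairwise_disjoint_interiors D"

definition underlying :: "config \<Rightarrow> (real^2) set set" where
  "underlying D = supp ` range D"

definition replaces :: "4 \<Rightarrow> config \<Rightarrow> config \<Rightarrow> bool" where
  "replaces i D D' \<longleftrightarrow> oriented_descartes D \<and> oriented_descartes D' \<and>
     (\<forall>j. j \<noteq> i \<longrightarrow> D' j = D j) \<and> supp (D' i) \<noteq> supp (D i) \<and>
     (\<forall>j p q. j \<noteq> i \<longrightarrow> tangent_at (D i) (D j) p \<longrightarrow> tangent_at (D' i) (D j) q \<longrightarrow> p \<noteq> q)"

definition replacement_step :: "config \<Rightarrow> config \<Rightarrow> bool" where
  "replacement_step D D' \<longleftrightarrow> (\<exists>i. replaces i D D')"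

definition F_orbit :: "config \<Rightarrow> config set" where
  "F_orbit D = {D'. replacement_step\<^sup>*\<^sup>* D D'}"

text \<open>Augmented curvature-center coordinates; index 1,2,3,4 (= 0 in type 4).\<close>
definition vec4 :: "real \<Rightarrow> real \<Rightarrow> real \<Rightarrow> real \<Rightarrow> real^4" where
  "vec4 a b c d = (\<chi> i. if i = 1 then a else if i = 2 then b else if i = 3 then c else d)"

fun wcoord :: "ocircle \<Rightarrow> real^4" where
  "wcoord (OCirc c r) = vec4 ((norm c ^ 2 - r ^ 2) / r) (1 / r) (c $ 1 / r) (c $ 2 / r)"
| "wcoord (OLine h m) = vec4 (2 * m) 0 (h $ 1) (h $ 2)"

definition Wmat :: "config \<Rightarrow> real^4^4" where
  "Wmat D = (\<chi> k. wcoord (D k))"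

definition Smat :: "4 \<Rightarrow> real^4^4" where
  "Smat i = (\<chi> r c. if r = i then (if c = i then -1 else 2) else (if r = c then 1 else 0))"

inductive_set apollonian_group :: "(real^4^4) set" where
  one: "mat 1 \<in> apollonian_group"
| gen: "Smat i \<in> apollonian_group"
| mult: "U \<in> apollonian_group \<Longrightarrow> V \<in> apollonian_group \<Longrightarrow> U ** V \<in> apollonian_group"
| inv: "U \<in> apollonian_group \<Longrightarrow> matrix_inv U \<in> apollonian_group"

definition DD :: "config \<Rightarrow> config set" where
  "DD D = {D'. oriented_descartes D' \<and> (\<exists>D'' \<in> F_orbit D. underlying D' = underlying D'')}"

definition A_orbit :: "config \<Rightarrow> config set" where
  "A_orbit D1 = {D2. oriented_descartes D2 \<and> (\<exists>U \<in> apollonian_group. Wmat D2 = U ** Wmat D1)}"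

end

theory Submission
  imports Defs "HOL-Combinatorics.Permutations"
begin

text \<open>Identify an ordered oriented configuration \<open>D\<close> with its matrix \<open>W\<^sub>D\<close> of augmented
  curvature-center coordinates. The oriented Descartes configurations are exactly the matrices
  whose rows have Lorentz products given by \<open>Q\<^sub>D\<close>, and replacing the \<open>i\<close>-th circle multiplies
  \<open>W\<^sub>D\<close> on the left by \<open>S\<^sub>i\<close>; so \<open>F(D)\<close> corresponds to the words in the \<open>S\<^sub>i\<close> applied
  to \<open>W\<^sub>D\<close>. Two oriented configurations with the same underlying configuration differ by a
  relabelling of the circles, possibly combined with a global reversal of orientation. These
  \<open>2 \<cdot> 4! = 48\<close> relabellings commute with the action up to conjugating the generators, so each
  of them carries \<open>F(D)\<close> onto one orbit. The orbits are distinct and meet every underlying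
  configuration once because no word in the \<open>S\<^sub>i\<close> other than \<open>I\<close> is a signed permutation
  matrix: modulo 2 every word is \<open>I\<close>, and \<open>-I\<close> is excluded because the \<open>S\<^sub>i\<close> preserve
  the cone \<open>\<Sum>x\<^sub>k > 0, \<Sum>x\<^sub>k\<^sup>2 < (\<Sum>x\<^sub>k)\<^sup>2/2\<close>.\<close>

section \<open>The Lorentz form\<close>

lemma vec4_nth [simp]:
  "vec4 a b c d $ 1 = a" "vec4 a b c d $ 2 = b" "vec4 a b c d $ 3 = c" "vec4 a b c d $ 4 = d"
  by (simp_all add: vec4_def)

text \<open>The bilinear form with Gram matrix \<open>Q\<^sub>W\<^sup>-\<^sup>1\<close>. Since \<open>Q\<^sub>D\<^sup>2 = I\<close>, the condition
  \<open>W\<^sup>T Q\<^sub>D W = Q\<^sub>W\<close> is equivalent to \<open>W Q\<^sub>W\<^sup>-\<^sup>1 W\<^sup>T = Q\<^sub>D\<close>, i.e. to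
  \<open>descartes_matrix W\<close>.\<close>

definition lorentz :: "real^4 \<Rightarrow> real^4 \<Rightarrow> real" where
  "lorentz x y = -(x$1 * y$2 + x$2 * y$1) / 4 + (x$3 * y$3 + x$4 * y$4) / 2"

definition descartes_matrix :: "real^4^4 \<Rightarrow> bool" where
  "descartes_matrix W \<longleftrightarrow> (\<forall>j k. lorentz (W$j) (W$k) = (if j = k then 1/2 else -1/2))"

lemma descartes_matrixD:
  "descartes_matrix W \<Longrightarrow> lorentz (W$j) (W$k) = (if j = k then 1/2 else -1/2)"
  by (simp add: descartes_matrix_def)

lemma lorentz_commute: "lorentz x y = lorentz y x"
  by (simp add: lorentz_def field_simps)

lemma lorentz_bilinear:
  "lorentz (x + y) z = lorentz x z + lorentz y z"
  "lorentz z (x + y) = lorentz z x + lorentz z y"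
  "lorentz (x - y) z = lorentz x z - lorentz y z"
  "lorentz z (x - y) = lorentz z x - lorentz z y"
  "lorentz (- x) z = - lorentz x z"
  "lorentz z (- x) = - lorentz z x"
  "lorentz (c *\<^sub>R x) z = c * lorentz x z"
  "lorentz z (c *\<^sub>R x) = c * lorentz z x"
  by (simp_all add: lorentz_def field_simps)

lemma lorentz_zero [simp]: "lorentz 0 z = 0" "lorentz z 0 = 0"
  by (simp_all add: lorentz_def)

lemma lorentz_sum_left: "lorentz (sum f S) z = (\<Sum>k\<in>S. lorentz (f k) z)"
  by (induction S rule: infinite_finite_induct) (simp_all add: lorentz_bilinear)

lemma lorentz_sum_right: "lorentz z (sum f S) = (\<Sum>k\<in>S. lorentz z (f k))"
  by (induction S rule: infinite_finite_induct) (simp_all add: lorentz_bilinear)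

lemma descartes_matrix_uminus: "descartes_matrix W \<Longrightarrow> descartes_matrix (- W)"
  by (simp add: descartes_matrix_def lorentz_bilinear)

definition Q_W_inv :: "real^4^4" where
  "Q_W_inv = (\<chi> r c. if (r = 1 \<and> c = 2) \<or> (r = 2 \<and> c = 1) then -1/4
                 else if (r = 3 \<and> c = 3) \<or> (r = 4 \<and> c = 4) then 1/2 else 0)"

definition Q_D :: "real^4^4" where
  "Q_D = (\<chi> j k. if j = k then 1/2 else -1/2)"

lemma lorentz_eq_inner: "lorentz x y = x \<bullet> (Q_W_inv *v y)"
  by (simp add: lorentz_def inner_vec_def sum_4 matrix_vector_mult_def Q_W_inv_def field_simps)

lemma Q_D_mult_Q_D: "Q_D ** Q_D = mat 1"
  by (simp add: vec_eq_iff forall_4 matrix_matrix_mult_def sum_4 Q_D_def mat_def)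

lemma descartes_matrix_Q_D:
  assumes "descartes_matrix W" shows "W ** (Q_W_inv ** transpose W) = Q_D"
proof -
  have "(W ** (Q_W_inv ** transpose W))$j$k = lorentz (W$j) (W$k)" for j k
    by (simp add: matrix_matrix_mult_def lorentz_eq_inner inner_vec_def matrix_vector_mult_def
        transpose_def mult.commute)
  then show ?thesis
    using assms by (simp add: vec_eq_iff descartes_matrix_def Q_D_def)
qed

lemma descartes_matrix_left_inverse:
  assumes "descartes_matrix W" obtains L where "L ** W = mat 1"
proof -
  have "W ** ((Q_W_inv ** transpose W) ** Q_D) = mat 1"
    using descartes_matrix_Q_D[OF assms] Q_D_mult_Q_D by (metis matrix_mul_assoc)
  then show ?thesis
    using matrix_left_right_inverse that by blast
qed

lemma lorentz_nondegenerate: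
  assumes "descartes_matrix W" and "\<And>j. lorentz (W$j) z = 0" shows "z = 0"
proof -
  obtain L where L: "L ** W = mat 1"
    using descartes_matrix_left_inverse[OF assms(1)] .
  have "W *v (Q_W_inv *v z) = 0"
    using assms(2) by (simp add: vec_eq_iff lorentz_eq_inner matrix_vector_mult_def inner_vec_def
        mult.commute)
  then have "Q_W_inv *v z = 0"
    by (metis L matrix_vector_mul_assoc matrix_vector_mul_lid matrix_vector_mult_0_right)
  then show ?thesis
    by (simp add: vec_eq_iff forall_4 matrix_vector_mult_def sum_4 Q_W_inv_def)
qed

section \<open>Coordinates with respect to a Descartes matrix\<close>

definition pairing :: "real^4^4 \<Rightarrow> real^4 \<Rightarrow> 4 \<Rightarrow> real" where
  "pairing W y j = lorentz (W$j) y"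

definition pairing_sum :: "real^4^4 \<Rightarrow> real^4 \<Rightarrow> real" where
  "pairing_sum W y = (\<Sum>j\<in>UNIV. pairing W y j)"

lemma lorentz_row_combination:
  assumes "descartes_matrix W"
  shows "lorentz (W$j) (\<Sum>k\<in>UNIV. a k *\<^sub>R W$k) = a j - (\<Sum>k\<in>UNIV. a k) / 2"
proof -
  have "lorentz (W$j) (\<Sum>k\<in>UNIV. a k *\<^sub>R W$k) = (\<Sum>k\<in>UNIV. a k * (if j = k then 1/2 else -1/2))"
    by (simp add: lorentz_sum_right lorentz_bilinear descartes_matrixD[OF assms] mult.commute)
  also have "\<dots> = a j - (\<Sum>k\<in>UNIV. a k) / 2"
    using exhaust_4[of j] by (auto simp: sum_4 field_simps)
  finally show ?thesis .
qed

lemma descartes_matrix_expansion: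
  assumes "descartes_matrix W"
  shows "y = (\<Sum>k\<in>UNIV. (pairing W y k - pairing_sum W y / 2) *\<^sub>R W$k)"
proof -
  let ?a = "\<lambda>k. pairing W y k - pairing_sum W y / 2"
  have "(\<Sum>k\<in>UNIV. ?a k) = - pairing_sum W y"
    by (simp add: pairing_sum_def sum_subtractf)
  then have "lorentz (W$j) (y - (\<Sum>k\<in>UNIV. ?a k *\<^sub>R W$k)) = 0" for j
    by (simp add: lorentz_bilinear lorentz_row_combination[OF assms] pairing_def)
  then have "y - (\<Sum>k\<in>UNIV. ?a k *\<^sub>R W$k) = 0"
    by (rule lorentz_nondegenerate[OF assms])
  then show ?thesis by simp
qed

lemma lorentz_via_pairings:
  assumes "descartes_matrix W"
  shows "lorentz y z = (\<Sum>k\<in>UNIV. pairing W y k * pairing W z k) - pairing_sum W y * pairing_sum W z / 2"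
proof -
  have "lorentz y z = lorentz (\<Sum>k\<in>UNIV. (pairing W y k - pairing_sum W y / 2) *\<^sub>R W$k) z"
    using descartes_matrix_expansion[OF assms, of y] by simp
  also have "\<dots> = (\<Sum>k\<in>UNIV. (pairing W y k - pairing_sum W y / 2) * pairing W z k)"
    by (simp add: lorentz_sum_left lorentz_bilinear pairing_def)
  finally show ?thesis
    by (simp add: sum_4 pairing_sum_def field_simps)
qed

lemma null_vector_pairings:
  assumes "descartes_matrix W" and "lorentz y y = 0"
  shows "(\<Sum>k\<in>UNIV. (pairing W y k)\<^sup>2) = (pairing_sum W y)\<^sup>2 / 2"
  using lorentz_via_pairings[OF assms(1), of y y] assms(2) by (simp add: power2_eq_square)

lemma descartes_matrix_rows_independent:
  assumes "descartes_matrix W" and "(\<Sum>k\<in>UNIV. c k *\<^sub>R W$k) = 0"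
  shows "c k = 0"
proof -
  have "c j = (\<Sum>k\<in>UNIV. c k) / 2" for j
    using lorentz_row_combination[OF assms(1), of j c] assms(2) by simp
  then show ?thesis
    by (simp add: sum_4) (smt (verit) exhaust_4)
qed

lemma ex_distinct_4:
  fixes i j :: 4 assumes "i \<noteq> j" shows "\<exists>k l. distinct [i, j, k, l]"
proof -
  have "(\<exists>x::4. P x) \<longleftrightarrow> P 1 \<or> P 2 \<or> P 3 \<or> P 4" for P
    by (metis exhaust_4)
  then show ?thesis
    using assms exhaust_4[of i] exhaust_4[of j] by (elim disjE) simp_all
qed

lemma ex_distinct_4_from: "\<exists>j k l. distinct [i::4, j, k, l]"
proof -
  have "i \<noteq> i + 1" by simp
  then show ?thesis using ex_distinct_4 by blast
qed

lemma distinct_4_neq: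
  fixes i j k l :: 4 assumes "distinct [i, j, k, l]"
  shows "i \<noteq> j" "i \<noteq> k" "i \<noteq> l" "j \<noteq> k" "j \<noteq> l" "k \<noteq> l"
        "j \<noteq> i" "k \<noteq> i" "l \<noteq> i" "k \<noteq> j" "l \<noteq> j" "l \<noteq> k"
  using assms by auto

lemma UNIV_distinct_4:
  fixes i j k l :: 4 assumes "distinct [i, j, k, l]" shows "UNIV = {i, j, k, l}"
proof -
  have "card {i, j, k, l} = 4" using assms by simp
  then show ?thesis using card_subset_eq[of UNIV "{i, j, k, l}"] by simp
qed

lemma sum_UNIV_distinct_4:
  fixes i j k l :: 4 assumes "distinct [i, j, k, l]"
  shows "(\<Sum>m\<in>UNIV. f m) = f i + f j + f k + f l"
  using assms by (simp add: UNIV_distinct_4[OF assms] add.assoc)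

lemma sum_Diff_distinct_4:
  fixes i j k l :: 4 assumes "distinct [i, j, k, l]"
  shows "(\<Sum>m\<in>UNIV - {i}. f m) = f j + f k + f l"
proof -
  have "UNIV - {i} = {j, k, l}" using UNIV_distinct_4[OF assms] assms by auto
  then show ?thesis using assms by (simp add: add.assoc)
qed

section \<open>Circles as vectors\<close>

text \<open>Points of the extended plane as null vectors of the Lorentz form.\<close>

definition point_vec :: "real^2 \<Rightarrow> real^4" where
  "point_vec x = vec4 (x$1 ^ 2 + x$2 ^ 2) 1 (x$1) (x$2)"

definition infinity_vec :: "real^4" where
  "infinity_vec = vec4 1 0 0 0"

lemma norm_vec2_sq: "(norm (x::real^2))\<^sup>2 = x$1 ^ 2 + x$2 ^ 2"
  unfolding power2_norm_eq_inner by (simp add: inner_vec_def sum_2 power2_eq_square)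

lemma inner_vec2: "(h::real^2) \<bullet> x = h$1 * x$1 + h$2 * x$2"
  by (simp add: inner_vec_def sum_2)

lemma lorentz_point_vec:
  "lorentz v (point_vec x) = -(v$1 + v$2 * (x$1 ^ 2 + x$2 ^ 2)) / 4 + (v$3 * x$1 + v$4 * x$2) / 2"
  by (simp add: lorentz_def point_vec_def)

lemma lorentz_point_vec_self: "lorentz (point_vec x) (point_vec x) = 0"
  by (simp add: lorentz_def point_vec_def field_simps power2_eq_square)

lemma lorentz_infinity_vec: "lorentz v infinity_vec = - v$2 / 4"
  by (simp add: lorentz_def infinity_vec_def)

lemma lorentz_infinity_vec_self: "lorentz infinity_vec infinity_vec = 0"
  by (simp add: lorentz_def infinity_vec_def)

lemma point_vec_neq_zero: "point_vec x \<noteq> 0"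
  by (simp add: point_vec_def vec_eq_iff forall_4)

lemma infinity_vec_neq_zero: "infinity_vec \<noteq> 0"
  by (simp add: infinity_vec_def vec_eq_iff forall_4)

lemma point_vec_inj: "point_vec x = point_vec y \<Longrightarrow> x = y"
  by (simp add: point_vec_def vec_eq_iff forall_4 forall_2)

lemma wcoord_OCirc:
  "wcoord (OCirc c r) = vec4 ((c$1 ^ 2 + c$2 ^ 2 - r\<^sup>2) / r) (1 / r) (c$1 / r) (c$2 / r)"
  by (simp add: norm_vec2_sq)

lemma lorentz_wcoord_OCirc_point_vec:
  "r \<noteq> 0 \<Longrightarrow> lorentz (wcoord (OCirc c r)) (point_vec x) = (r\<^sup>2 - (dist c x)\<^sup>2) / (4 * r)"
  unfolding wcoord_OCirc dist_norm norm_vec2_sq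
  by (simp add: lorentz_point_vec field_simps power2_eq_square)

lemma lorentz_wcoord_self: "valid_oc C \<Longrightarrow> lorentz (wcoord C) (wcoord C) = 1/2"
proof (induction C)
  case (OCirc c r)
  then show ?case
    unfolding wcoord_OCirc by (simp add: lorentz_def field_simps power2_eq_square)
next
  case (OLine h m)
  then have "h$1 ^ 2 + h$2 ^ 2 = 1" using norm_vec2_sq[of h] by simp
  then show ?case by (simp add: lorentz_def field_simps power2_eq_square)
qed

lemma mem_supp_iff_lorentz: "valid_oc C \<Longrightarrow> x \<in> supp C \<longleftrightarrow> lorentz (wcoord C) (point_vec x) = 0"
proof (induction C)
  case (OCirc c r)
  then have "x \<in> supp (OCirc c r) \<longleftrightarrow> r\<^sup>2 = (dist c x)\<^sup>2"
    using power2_eq_iff_nonneg[of "dist c x" "\<bar>r\<bar>"] by auto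
  then show ?case
    using OCirc lorentz_wcoord_OCirc_point_vec[of r c x] by simp
next
  case (OLine h m)
  then show ?case by (auto simp: lorentz_point_vec inner_vec2 field_simps)
qed

lemma mem_oint_iff_lorentz: "valid_oc C \<Longrightarrow> x \<in> oint C \<longleftrightarrow> lorentz (wcoord C) (point_vec x) > 0"
proof (induction C)
  case (OCirc c r)
  have "dist c x < r \<longleftrightarrow> (dist c x)\<^sup>2 < r\<^sup>2" if "r > 0"
    using that power_less_imp_less_base[of "dist c x" 2 r] power_strict_mono[of "dist c x" r 2] by auto
  moreover have "- r < dist c x \<longleftrightarrow> r\<^sup>2 < (dist c x)\<^sup>2" if "r < 0"
    using that power_less_imp_less_base[of "- r" 2 "dist c x"] power_strict_mono[of "- r" "dist c x" 2]
    by auto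
  ultimately show ?case
    using OCirc lorentz_wcoord_OCirc_point_vec[of r c x]
    by (auto simp: zero_less_divide_iff not_le)
next
  case (OLine h m)
  then show ?case by (auto simp: lorentz_point_vec inner_vec2 field_simps)
qed

lemma wcoord_orev: "wcoord (orev C) = - wcoord C"
  by (cases C) (simp_all add: vec_eq_iff forall_4 vec4_def)

lemma orev_simps [simp]:
  "valid_oc (orev C) = valid_oc C" "supp (orev C) = supp C" "is_line (orev C) = is_line C"
  "orev (orev C) = C"
  by (cases C; simp)+

lemma orev_neq: "valid_oc C \<Longrightarrow> orev C \<noteq> C"
proof (cases C)
  case (OLine h m)
  moreover assume "valid_oc C"
  ultimately have "h \<noteq> 0" by auto
  then have "- h \<noteq> h" by (auto simp: vec_eq_iff)
  then show ?thesis using OLine by simp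
qed auto

lemma is_line_iff_wcoord: "valid_oc C \<Longrightarrow> is_line C \<longleftrightarrow> wcoord C $ 2 = 0"
  by (cases C) auto

lemma ex_wcoord_eq:
  assumes "lorentz v v = 1/2" obtains C where "valid_oc C" "wcoord C = v"
proof (cases "v$2 = 0")
  case True
  define h where "h = (vector [v$3, v$4] :: real^2)"
  have "v$3 ^ 2 + v$4 ^ 2 = 1"
    using True assms by (simp add: lorentz_def power2_eq_square)
  then have "(norm h)\<^sup>2 = 1" by (simp add: norm_vec2_sq h_def)
  then have "norm h = 1" using norm_ge_zero[of h] by (auto simp: power2_eq_1_iff)
  moreover have "wcoord (OLine h (v$1 / 2)) = v"
    using True by (simp add: h_def vec_eq_iff forall_4)
  ultimately show ?thesis using that[of "OLine h (v$1 / 2)"] by simp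
next
  case False
  have e: "v$3 ^ 2 + v$4 ^ 2 - 1 = v$1 * v$2"
    using assms by (simp add: lorentz_def field_simps power2_eq_square)
  define c where "c = (vector [v$3 / v$2, v$4 / v$2] :: real^2)"
  have "wcoord (OCirc c (1 / v$2)) = v"
    unfolding wcoord_OCirc using False e
    by (simp add: c_def vec_eq_iff forall_4 field_simps power2_eq_square)
  then show ?thesis using False that[of "OCirc c (1 / v$2)"] by simp
qed

lemma wcoord_inj:
  assumes "valid_oc C" "valid_oc C'" "wcoord C = wcoord C'" shows "C = C'"
proof -
  have e: "wcoord C $ k = wcoord C' $ k" for k using assms(3) by simp
  show ?thesis
  proof (cases C; cases C')
    fix c r c' r' assume C: "C = OCirc c r" "C' = OCirc c' r'"
    then have "r = r'" using e[of 2] by simp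
    moreover have "c$1 = c'$1" "c$2 = c'$2"
      using e[of 3] e[of 4] C assms \<open>r = r'\<close> by auto
    ultimately show ?thesis using C by (simp add: vec_eq_iff forall_2)
  next
    fix h m h' m' assume C: "C = OLine h m" "C' = OLine h' m'"
    then have "m = m'" "h$1 = h'$1" "h$2 = h'$2" using e[of 1] e[of 3] e[of 4] by auto
    then show ?thesis using C by (simp add: vec_eq_iff forall_2)
  qed (use e[of 2] assms in auto)
qed

lemma vanishing_on_circle_imp_multiple:
  assumes "r \<noteq> 0" and vanish: "\<And>x. dist c x = \<bar>r\<bar> \<Longrightarrow> lorentz v (point_vec x) = 0"
  shows "\<exists>s. v = s *\<^sub>R wcoord (OCirc c r)"
proof -
  define a b where "a = c$1" and "b = c$2"
  define p where "p y1 y2 = (vector [a + y1, b + y2] :: real^2)" for y1 y2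
  have on_circle: "dist c (p y1 y2) = \<bar>r\<bar>" if "y1\<^sup>2 + y2\<^sup>2 = r\<^sup>2" for y1 y2
  proof -
    have "(dist c (p y1 y2))\<^sup>2 = \<bar>r\<bar>\<^sup>2"
      using that by (simp add: dist_norm norm_vec2_sq p_def a_def b_def power2_commute)
    then show ?thesis using power2_eq_iff_nonneg[of "dist c (p y1 y2)" "\<bar>r\<bar>"] by simp
  qed
  have f: "lorentz v (point_vec (p y1 y2)) =
      -(v$1 + v$2 * ((a + y1)\<^sup>2 + (b + y2)\<^sup>2)) / 4 + (v$3 * (a + y1) + v$4 * (b + y2)) / 2" for y1 y2
    by (simp add: lorentz_point_vec p_def)
  have e: "lorentz v (point_vec (p r 0)) = 0" "lorentz v (point_vec (p (- r) 0)) = 0"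
       "lorentz v (point_vec (p 0 r)) = 0" "lorentz v (point_vec (p 0 (- r))) = 0"
    by (simp_all add: vanish on_circle)
  have "lorentz v (point_vec (p r 0)) - lorentz v (point_vec (p (- r) 0)) = r * (v$3 - v$2 * a)"
    unfolding f by (simp add: field_simps power2_eq_square)
  then have v3: "v$3 = v$2 * a" using e assms(1) by simp
  have "lorentz v (point_vec (p 0 r)) - lorentz v (point_vec (p 0 (- r))) = r * (v$4 - v$2 * b)"
    unfolding f by (simp add: field_simps power2_eq_square)
  then have v4: "v$4 = v$2 * b" using e assms(1) by simp
  have "lorentz v (point_vec (p r 0)) + lorentz v (point_vec (p (- r) 0))
      = -(v$1 + v$2 * (a\<^sup>2 + r\<^sup>2 + b\<^sup>2)) / 2 + v$3 * a + v$4 * b"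
    unfolding f by (simp add: field_simps power2_eq_square)
  then have v1: "v$1 = v$2 * (a\<^sup>2 + b\<^sup>2 - r\<^sup>2)"
    using e v3 v4 by (simp add: field_simps power2_eq_square)
  have "v = (v$2 * r) *\<^sub>R wcoord (OCirc c r)"
    unfolding wcoord_OCirc using assms(1) v1 v3 v4
    by (simp add: vec_eq_iff forall_4 a_def b_def field_simps) (metis distrib_left)
  then show ?thesis ..
qed

lemma vanishing_on_line_imp_multiple:
  assumes "norm h = 1" and vanish: "\<And>x. h \<bullet> x = m \<Longrightarrow> lorentz v (point_vec x) = 0"
  shows "\<exists>s. v = s *\<^sub>R wcoord (OLine h m)"
proof -
  have unit: "h$1 ^ 2 + h$2 ^ 2 = 1" using assms(1) norm_vec2_sq[of h] by simp
  define p where "p t = (vector [m * h$1 - t * h$2, m * h$2 + t * h$1] :: real^2)" for t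
  have "h \<bullet> p t = m * (h$1 ^ 2 + h$2 ^ 2)" for t
    by (simp add: p_def inner_vec2 algebra_simps power2_eq_square)
  then have e: "lorentz v (point_vec (p t)) = 0" for t
    using unit vanish by simp
  have "(p t)$1 ^ 2 + (p t)$2 ^ 2 = (m\<^sup>2 + t\<^sup>2) * (h$1 ^ 2 + h$2 ^ 2)" for t
    by (simp add: p_def power2_eq_square algebra_simps)
  then have f: "lorentz v (point_vec (p t)) =
      -(v$1 + v$2 * (m\<^sup>2 + t\<^sup>2)) / 4 + (m * (v$3 * h$1 + v$4 * h$2) + t * (v$4 * h$1 - v$3 * h$2)) / 2"
    for t using unit by (simp add: lorentz_point_vec p_def algebra_simps)
  define s where "s = v$3 * h$1 + v$4 * h$2"
  have v2: "v$2 = 0" and perp: "v$4 * h$1 - v$3 * h$2 = 0"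
    using e[of 1] e[of "-1"] e[of 0] unfolding f by (simp_all add: field_simps)
  have v1: "v$1 = 2 * m * s"
    using e[of 0] v2 unfolding f s_def by (simp add: field_simps)
  have "v$3 = s * h$1" "v$4 = s * h$2"
    using unit perp unfolding s_def power2_eq_square by algebra+
  then have "v = s *\<^sub>R wcoord (OLine h m)"
    using v1 v2 by (simp add: vec_eq_iff forall_4)
  then show ?thesis ..
qed

lemma vanishing_on_supp_imp_multiple:
  assumes "valid_oc C" and "\<And>x. x \<in> supp C \<Longrightarrow> lorentz v (point_vec x) = 0"
  shows "\<exists>s. v = s *\<^sub>R wcoord C"
  using assms vanishing_on_circle_imp_multiple vanishing_on_line_imp_multiple by (cases C) auto

lemma supp_eq_imp_eq_or_orev:
  assumes "valid_oc C" "valid_oc C'" "supp C' = supp C"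
  shows "C' = C \<or> C' = orev C"
proof -
  obtain s where s: "wcoord C' = s *\<^sub>R wcoord C"
    using vanishing_on_supp_imp_multiple[OF assms(1)] mem_supp_iff_lorentz assms by metis
  have "1/2 = s\<^sup>2 * (1/2)"
    using lorentz_wcoord_self[OF assms(2)] lorentz_wcoord_self[OF assms(1)]
    unfolding s by (simp add: lorentz_bilinear power2_eq_square)
  then have "s = 1 \<or> s = -1" by (simp add: power2_eq_1_iff)
  then have "wcoord C' = wcoord C \<or> wcoord C' = wcoord (orev C)"
    using s by (auto simp: wcoord_orev)
  then show ?thesis
    using wcoord_inj assms by (metis orev_simps(1))
qed

section \<open>Tangent circles with disjoint interiors\<close>

text \<open>For a circle with centre \<open>c\<close> and signed radius \<open>r\<close> this is \<open>(x - c) / r\<close>, for a line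
  it is \<open>-h\<close>: at a point \<open>x\<close> of \<open>C\<close>, the unit normal pointing away from the interior.\<close>

definition outer_normal :: "ocircle \<Rightarrow> real^2 \<Rightarrow> real^2" where
  "outer_normal C x = (wcoord C $ 2) *\<^sub>R x - vector [wcoord C $ 3, wcoord C $ 4]"

lemma wcoord_1_through_point:
  assumes "valid_oc C" "x \<in> supp C"
  shows "wcoord C $ 1 = 2 * (wcoord C $ 3 * x$1 + wcoord C $ 4 * x$2) - wcoord C $ 2 * (x$1 ^ 2 + x$2 ^ 2)"
  using assms mem_supp_iff_lorentz[OF assms(1), of x] by (simp add: lorentz_point_vec field_simps)

lemma wcoord_norm_eq:
  "valid_oc C \<Longrightarrow> (wcoord C $ 3)\<^sup>2 + (wcoord C $ 4)\<^sup>2 - wcoord C $ 1 * wcoord C $ 2 = 1"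
  using lorentz_wcoord_self[of C] by (simp add: lorentz_def field_simps power2_eq_square)

lemma outer_normal_unit:
  assumes "valid_oc C" "x \<in> supp C" shows "outer_normal C x \<bullet> outer_normal C x = 1"
  using wcoord_norm_eq[OF assms(1)] unfolding wcoord_1_through_point[OF assms]
  by (simp add: outer_normal_def inner_vec2 power2_eq_square algebra_simps)

lemma lorentz_point_vec_shift:
  assumes "valid_oc C" "x \<in> supp C"
  shows "lorentz (wcoord C) (point_vec (x + y))
           = -(wcoord C $ 2 * (y \<bullet> y) + 2 * (outer_normal C x \<bullet> y)) / 4"
  unfolding lorentz_point_vec wcoord_1_through_point[OF assms]
  by (simp add: outer_normal_def inner_vec2 field_simps power2_eq_square)

lemma lorentz_wcoord_through_common_point:
  assumes "valid_oc C" "valid_oc C'" "x \<in> supp C" "x \<in> supp C'"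
  shows "lorentz (wcoord C) (wcoord C') = (outer_normal C x \<bullet> outer_normal C' x) / 2"
  unfolding lorentz_def wcoord_1_through_point[OF assms(1,3)] wcoord_1_through_point[OF assms(2,4)]
  by (simp add: outer_normal_def inner_vec2 field_simps power2_eq_square)

text \<open>Moving from the common point against the sum of the two outer normals enters both
  interiors, to first order; a short enough step keeps the quadratic terms small.\<close>

lemma interiors_meet_unless_opposite_normals:
  assumes C: "valid_oc C" "x \<in> supp C" and C': "valid_oc C'" "x \<in> supp C'"
    and "outer_normal C' x \<noteq> - outer_normal C x"
  shows "oint C \<inter> oint C' \<noteq> {}"
proof -
  define n n' where "n = outer_normal C x" and "n' = outer_normal C' x"
  define z where "z = n + n'"
  have "z \<noteq> 0" using assms(5) unfolding z_def n_def n'_def by (metis add_eq_0_iff)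
  then have Z: "z \<bullet> z > 0" by simp
  have c0: "n \<bullet> z = (z \<bullet> z) / 2" "n' \<bullet> z = (z \<bullet> z) / 2"
    using outer_normal_unit[OF C] outer_normal_unit[OF C']
    by (simp_all add: n_def n'_def z_def inner_add_left inner_add_right inner_commute)
  define K where "K = \<bar>wcoord C $ 2\<bar> + \<bar>wcoord C' $ 2\<bar>"
  define t where "t = 1 / (1 + K)"
  have "K \<ge> 0" by (simp add: K_def)
  then have t: "t > 0" "K * t < 1" by (simp_all add: t_def)
  have pos: "lorentz (wcoord D) (point_vec (x + (- t) *\<^sub>R z)) > 0"
    if "valid_oc D" "x \<in> supp D" "outer_normal D x \<bullet> z = (z \<bullet> z) / 2" "\<bar>wcoord D $ 2\<bar> \<le> K" for D
  proof -
    have "wcoord D $ 2 * t \<le> K * t"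
      using that(4) t by (intro mult_right_mono) auto
    then have "wcoord D $ 2 * t * (z \<bullet> z) < z \<bullet> z"
      using t Z by (smt (verit) mult_less_cancel_right2)
    then show ?thesis
      using t(1) unfolding lorentz_point_vec_shift[OF that(1,2)]
      by (simp add: that(3) algebra_simps)
  qed
  have "x + (- t) *\<^sub>R z \<in> oint C" "x + (- t) *\<^sub>R z \<in> oint C'"
    using pos[OF C] pos[OF C'] c0 mem_oint_iff_lorentz C C' by (auto simp: n_def n'_def K_def)
  then show ?thesis by blast
qed

lemma disjoint_half_planes_opposite:
  assumes "norm h = 1" "norm h' = 1" and disj: "oint (OLine h m) \<inter> oint (OLine h' m') = {}"
  shows "h' = - h"
proof (rule ccontr)
  assume "h' \<noteq> - h"
  define z where "z = h + h'"
  have hh: "h \<bullet> h = 1" "h' \<bullet> h' = 1"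
    using assms power2_norm_eq_inner[of h] power2_norm_eq_inner[of h'] by auto
  have "z \<noteq> 0" using \<open>h' \<noteq> - h\<close> unfolding z_def by (metis add_eq_0_iff)
  then have "z \<bullet> z > 0" by simp
  define t where "t = 2 * (\<bar>m\<bar> + \<bar>m'\<bar> + 1) / (z \<bullet> z)"
  have tz: "t * (z \<bullet> z) = 2 * (\<bar>m\<bar> + \<bar>m'\<bar> + 1)"
    using \<open>z \<bullet> z > 0\<close> by (simp add: t_def)
  have hz: "h \<bullet> z = (z \<bullet> z) / 2" "h' \<bullet> z = (z \<bullet> z) / 2"
    using hh by (simp_all add: z_def inner_add_left inner_add_right inner_commute)
  have "h \<bullet> (t *\<^sub>R z) = t * (z \<bullet> z) / 2" "h' \<bullet> (t *\<^sub>R z) = t * (z \<bullet> z) / 2"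
    by (simp_all add: hz)
  then have "h \<bullet> (t *\<^sub>R z) = \<bar>m\<bar> + \<bar>m'\<bar> + 1" "h' \<bullet> (t *\<^sub>R z) = \<bar>m\<bar> + \<bar>m'\<bar> + 1"
    by (simp_all add: tz)
  then have "t *\<^sub>R z \<in> oint (OLine h m) \<inter> oint (OLine h' m')" by auto
  then show False using disj by blast
qed

lemma lorentz_tangent_disjoint:
  assumes C1: "valid_oc C1" and C2: "valid_oc C2" and "tangent_at C1 C2 p"
    and disj: "oint C1 \<inter> oint C2 = {}"
  shows "lorentz (wcoord C1) (wcoord C2) = -1/2"
proof -
  consider "is_line C1 \<and> is_line C2" | q where "q \<in> supp C1" "q \<in> supp C2"
    using assms(3) unfolding tangent_at_def by blast
  then show ?thesis
  proof cases
    case 1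
    then obtain h m h' m' where C: "C1 = OLine h m" "C2 = OLine h' m'"
      by (cases C1; cases C2) auto
    have n: "norm h = 1" "norm h' = 1" using C1 C2 C by auto
    then have "h' = - h" using disjoint_half_planes_opposite disj C by simp
    moreover have "h$1 ^ 2 + h$2 ^ 2 = 1" using n norm_vec2_sq[of h] by simp
    ultimately show ?thesis using C by (simp add: lorentz_def field_simps power2_eq_square)
  next
    case 2
    then have "outer_normal C2 q = - outer_normal C1 q"
      using interiors_meet_unless_opposite_normals C1 C2 disj by blast
    then show ?thesis
      using lorentz_wcoord_through_common_point[OF C1 C2 2] outer_normal_unit[OF C1 2(1)] by simp
  qed
qed

lemma Wmat_nth [simp]: "Wmat D $ k = wcoord (D k)"
  by (simp add: Wmat_def)

lemma Wmat_orev: "Wmat (orev \<circ> D) = - Wmat D"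
  by (simp add: vec_eq_iff wcoord_orev)

lemma oriented_descartes_valid: "oriented_descartes D \<Longrightarrow> valid_oc (D k)"
  by (simp add: oriented_descartes_def descartes_def)

lemma oriented_descartes_tangency_points:
  assumes "oriented_descartes D"
  obtains P :: "4 \<Rightarrow> 4 \<Rightarrow> (real^2) option"
  where "\<And>i j. i \<noteq> j \<Longrightarrow> tangent_at (D i) (D j) (P i j)"
    and "\<And>i j k l. i \<noteq> j \<Longrightarrow> k \<noteq> l \<Longrightarrow> P i j = P k l \<Longrightarrow> {i, j} = {k, l}"
  using assms unfolding oriented_descartes_def descartes_def by metis

lemma oriented_descartes_imp_descartes_matrix:
  assumes "oriented_descartes D" shows "descartes_matrix (Wmat D)"
proof -
  note valid = oriented_descartes_valid[OF assms]
  obtain P where P: "\<And>i j. i \<noteq> j \<Longrightarrow> tangent_at (D i) (D j) (P i j)"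
    using oriented_descartes_tangency_points[OF assms] by metis
  have "lorentz (wcoord (D j)) (wcoord (D k)) = -1/2" if "j \<noteq> k" for j k
  proof -
    have "pairwise_disjoint_interiors D \<or> pairwise_disjoint_interiors (orev \<circ> D)"
      using assms by (simp add: oriented_descartes_def)
    then show ?thesis
    proof
      assume "pairwise_disjoint_interiors D"
      then show ?thesis
        using lorentz_tangent_disjoint[OF valid valid P[OF that]] that
        by (simp add: pairwise_disjoint_interiors_def)
    next
      assume "pairwise_disjoint_interiors (orev \<circ> D)"
      moreover have "tangent_at (orev (D j)) (orev (D k)) (P j k)"
        using P[OF that] by (simp add: tangent_at_def)
      ultimately have "lorentz (wcoord (orev (D j))) (wcoord (orev (D k))) = -1/2"
        using lorentz_tangent_disjoint[of "orev (D j)" "orev (D k)"] valid that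
        by (simp add: pairwise_disjoint_interiors_def)
      then show ?thesis by (simp add: wcoord_orev lorentz_bilinear)
    qed
  qed
  then show ?thesis
    using lorentz_wcoord_self[OF valid] by (simp add: descartes_matrix_def)
qed

section \<open>Descartes matrices are Descartes configurations\<close>

lemma pairing_sum_infinity_vec: "pairing_sum W infinity_vec = - (\<Sum>k\<in>UNIV. W$k$2) / 4"
  by (simp add: pairing_sum_def pairing_def lorentz_infinity_vec sum_negf sum_divide_distrib)

text \<open>The sign of \<open>pairing_sum W\<close> separates the two nappes of the light cone.\<close>

lemma null_vectors_pairing_sums_same_sign:
  assumes W: "descartes_matrix W"
    and "lorentz y y = 0" "lorentz z z = 0" "lorentz y z < 0"
  shows "pairing_sum W y * pairing_sum W z > 0"
proof (rule ccontr)
  assume neg: "\<not> ?thesis"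
  define G H where "G = (\<chi> k. pairing W y k)" and "H = (\<chi> k. pairing W z k)"
  have GG: "G \<bullet> G = (pairing_sum W y)\<^sup>2 / 2" and HH: "H \<bullet> H = (pairing_sum W z)\<^sup>2 / 2"
    using null_vector_pairings[OF W assms(2)] null_vector_pairings[OF W assms(3)]
    by (simp_all add: G_def H_def inner_vec_def power2_eq_square)
  have "(G \<bullet> H)\<^sup>2 \<le> (G \<bullet> G) * (H \<bullet> H)" by (rule Cauchy_Schwarz_ineq)
  also have "\<dots> = (pairing_sum W y * pairing_sum W z / 2)\<^sup>2"
    unfolding GG HH by (simp add: power2_eq_square)
  finally have "\<bar>G \<bullet> H\<bar> \<le> \<bar>pairing_sum W y * pairing_sum W z / 2\<bar>"
    using abs_le_square_iff by blast
  moreover have "lorentz y z = G \<bullet> H - pairing_sum W y * pairing_sum W z / 2"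
    using lorentz_via_pairings[OF W, of y z] by (simp add: G_def H_def inner_vec_def)
  ultimately show False using assms(4) neg by (simp add: abs_if split: if_splits)
qed

lemma curvature_sum_neq_zero:
  assumes W: "descartes_matrix W" shows "(\<Sum>k\<in>UNIV. W$k$2) \<noteq> 0"
proof
  assume "(\<Sum>k\<in>UNIV. W$k$2) = 0"
  then have S: "pairing_sum W infinity_vec = 0" by (simp add: pairing_sum_infinity_vec)
  then have "(\<Sum>k\<in>UNIV. (pairing W infinity_vec k)\<^sup>2) = 0"
    using null_vector_pairings[OF W lorentz_infinity_vec_self] by simp
  then have "pairing W infinity_vec k = 0" for k
    using sum_nonneg_eq_0_iff[of UNIV "\<lambda>k. (pairing W infinity_vec k)\<^sup>2"] by simp
  then have "infinity_vec = 0"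
    using descartes_matrix_expansion[OF W, of infinity_vec] S by simp
  then show False using infinity_vec_neq_zero by simp
qed

lemma null_vector_two_positive_pairings:
  assumes W: "descartes_matrix W" and "lorentz y y = 0" "i \<noteq> j"
    and "pairing W y i > 0" "pairing W y j > 0"
  shows "pairing_sum W y > 0"
proof (rule ccontr)
  assume "\<not> pairing_sum W y > 0"
  obtain k l where d: "distinct [i, j, k, l]" using ex_distinct_4[OF assms(3)] by blast
  define a b c d where "a = pairing W y i" and "b = pairing W y j" and "c = pairing W y k"
    and "d = pairing W y l"
  have "a\<^sup>2 + b\<^sup>2 + c\<^sup>2 + d\<^sup>2 = (a + b + c + d)\<^sup>2 / 2"
    using null_vector_pairings[OF W assms(2)]
    unfolding sum_UNIV_distinct_4[OF d] pairing_sum_def a_def b_def c_def d_def .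
  moreover have "(a + b) * (c + d) < 0"
    using assms(4,5) \<open>\<not> pairing_sum W y > 0\<close>
    unfolding pairing_sum_def sum_UNIV_distinct_4[OF d] a_def b_def c_def d_def
    by (intro mult_pos_neg) auto
  moreover have "0 \<le> (a - b)\<^sup>2" "0 \<le> (c - d)\<^sup>2" by simp_all
  ultimately show False by (simp add: power2_eq_square algebra_simps)
qed

text \<open>A point in two interiors would have two positive pairings and hence, by
  the previous lemma, lie in the nappe opposite to the point at infinity.\<close>

lemma disjoint_interiors_if_curvature_sum_pos:
  assumes v: "\<And>k. valid_oc (C k)" and W: "descartes_matrix (Wmat C)"
    and curv: "(\<Sum>k\<in>UNIV. wcoord (C k) $ 2) > 0"
  shows "pairwise_disjoint_interiors C"
  unfolding pairwise_disjoint_interiors_def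
proof (intro allI impI)
  fix i j :: 4 assume "i \<noteq> j"
  show "oint (C i) \<inter> oint (C j) = {}"
  proof (rule ccontr)
    assume "oint (C i) \<inter> oint (C j) \<noteq> {}"
    then obtain x where "x \<in> oint (C i)" "x \<in> oint (C j)" by blast
    then have "pairing (Wmat C) (point_vec x) i > 0" "pairing (Wmat C) (point_vec x) j > 0"
      using mem_oint_iff_lorentz[OF v] by (simp_all add: pairing_def)
    then have "pairing_sum (Wmat C) (point_vec x) > 0"
      using null_vector_two_positive_pairings[OF W lorentz_point_vec_self \<open>i \<noteq> j\<close>] by blast
    moreover have "lorentz (point_vec x) infinity_vec < 0"
      by (simp add: lorentz_infinity_vec point_vec_def)
    then have "pairing_sum (Wmat C) (point_vec x) * pairing_sum (Wmat C) infinity_vec > 0"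
      using null_vectors_pairing_sums_same_sign[OF W lorentz_point_vec_self lorentz_infinity_vec_self]
      by blast
    ultimately show False
      using curv by (simp add: pairing_sum_infinity_vec mult_less_0_iff)
  qed
qed

lemma lorentz_row_pair_sum:
  assumes W: "descartes_matrix W" and "i \<noteq> j"
  shows "lorentz (W$i + W$j) (W$i + W$j) = 0" "lorentz (W$i) (W$i + W$j) = 0"
    "lorentz (W$j) (W$i + W$j) = 0"
  using assms by (simp_all add: lorentz_bilinear descartes_matrixD[OF W])

lemma null_vector_orthogonal_to_two_rows:
  assumes W: "descartes_matrix W" and "i \<noteq> j"
    and y: "lorentz y y = 0" "pairing W y i = 0" "pairing W y j = 0"
  obtains t where "y = t *\<^sub>R (W$i + W$j)"
proof -
  obtain k l where d: "distinct [i, j, k, l]" using ex_distinct_4[OF assms(2)] by blast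
  have "(pairing W y k)\<^sup>2 + (pairing W y l)\<^sup>2 = (pairing W y k + pairing W y l)\<^sup>2 / 2"
    using null_vector_pairings[OF W y(1)] y unfolding sum_UNIV_distinct_4[OF d] pairing_sum_def
    by simp
  then have "(pairing W y k - pairing W y l)\<^sup>2 = 0"
    by (simp add: power2_eq_square algebra_simps)
  then have kl: "pairing W y l = pairing W y k" by simp
  then have S: "pairing_sum W y = 2 * pairing W y k"
    unfolding pairing_sum_def sum_UNIV_distinct_4[OF d] using y by simp
  have "y = (\<Sum>m\<in>UNIV. (pairing W y m - pairing_sum W y / 2) *\<^sub>R W$m)"
    by (rule descartes_matrix_expansion[OF W])
  also have "\<dots> = (- pairing W y k) *\<^sub>R (W$i + W$j)"
    unfolding sum_UNIV_distinct_4[OF d] S using y kl by (simp add: scaleR_add_right)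
  finally show ?thesis using that by blast
qed

definition ext_point_vec :: "(real^2) option \<Rightarrow> real^4" where
  "ext_point_vec p = (case p of None \<Rightarrow> infinity_vec | Some x \<Rightarrow> point_vec x)"

lemma common_point_vec:
  assumes v: "\<And>k. valid_oc (C k)" and W: "descartes_matrix (Wmat C)" and "i \<noteq> j"
    and "x \<in> supp (C i)" "x \<in> supp (C j)"
  obtains t where "point_vec x = t *\<^sub>R (wcoord (C i) + wcoord (C j))"
  using null_vector_orthogonal_to_two_rows[OF W \<open>i \<noteq> j\<close> lorentz_point_vec_self] assms
    mem_supp_iff_lorentz[OF v] by (simp add: pairing_def) metis

lemma tangency_ext_point_vec:
  assumes v: "\<And>k. valid_oc (C k)" and W: "descartes_matrix (Wmat C)" and "i \<noteq> j"
    and T: "tangent_at (C i) (C j) p"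
  obtains a where "a \<noteq> 0" "ext_point_vec p = a *\<^sub>R (wcoord (C i) + wcoord (C j))"
proof (cases p)
  case None
  then have "is_line (C i)" "is_line (C j)" using T by (auto simp: tangent_at_def)
  then have "pairing (Wmat C) infinity_vec i = 0" "pairing (Wmat C) infinity_vec j = 0"
    using is_line_iff_wcoord[OF v] by (simp_all add: pairing_def lorentz_infinity_vec)
  then obtain t where t: "infinity_vec = t *\<^sub>R (wcoord (C i) + wcoord (C j))"
    using null_vector_orthogonal_to_two_rows[OF W \<open>i \<noteq> j\<close> lorentz_infinity_vec_self] by auto
  then have "t \<noteq> 0" using infinity_vec_neq_zero by auto
  then show ?thesis using that t None by (simp add: ext_point_vec_def)
next
  case (Some x)
  then have "x \<in> supp (C i)" "x \<in> supp (C j)" using T by (auto simp: tangent_at_def)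
  then obtain t where t: "point_vec x = t *\<^sub>R (wcoord (C i) + wcoord (C j))"
    using common_point_vec[OF v W \<open>i \<noteq> j\<close>] by blast
  then have "t \<noteq> 0" using point_vec_neq_zero by auto
  then show ?thesis using that t Some by (simp add: ext_point_vec_def)
qed

lemma row_pair_sums_proportional:
  assumes W: "descartes_matrix W" and "i \<noteq> j" "k \<noteq> l" "a \<noteq> 0"
    and e: "a *\<^sub>R (W$i + W$j) = b *\<^sub>R (W$k + W$l)"
  shows "{i, j} = {k, l}"
proof -
  obtain p q where d: "distinct [i, j, p, q]" using ex_distinct_4[OF assms(2)] by blast
  have val: "a * (lorentz (W$m) (W$i) + lorentz (W$m) (W$j))
      = b * (lorentz (W$m) (W$k) + lorentz (W$m) (W$l))" for m
    using arg_cong[OF e, of "lorentz (W$m)"] by (simp add: lorentz_bilinear)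
  have other: "m \<notin> {k, l}" if "m \<noteq> i" "m \<noteq> j" for m
    using val[of m] that assms(2-4) by (auto simp: descartes_matrixD[OF W])
  have "p \<notin> {k, l}" "q \<notin> {k, l}" using other[of p] other[of q] d by auto
  moreover have "k \<in> {i, j, p, q}" "l \<in> {i, j, p, q}" using UNIV_distinct_4[OF d] by auto
  ultimately show ?thesis using assms(2,3) by auto
qed

text \<open>The tangency point of the \<open>i\<close>-th and \<open>j\<close>-th circle, read off from the null vector
  \<open>W$i + W$j\<close>.\<close>

definition tangency_point :: "real^4^4 \<Rightarrow> 4 \<Rightarrow> 4 \<Rightarrow> (real^2) option" where
  "tangency_point W i j = (let n = W$i + W$j in
     if n$2 = 0 then None else Some (vector [n$3 / n$2, n$4 / n$2]))"

lemma point_vec_of_null_vector: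
  assumes "n$2 \<noteq> 0" "lorentz n n = 0"
  shows "point_vec (vector [n$3 / n$2, n$4 / n$2]) = (1 / n$2) *\<^sub>R n"
proof -
  have "n$2 * (n$3 * n$3) + n$2 * (n$4 * n$4) = n$1 * (n$2 * n$2)"
    using assms(2) by (simp add: lorentz_def field_simps) algebra
  then show ?thesis using assms(1)
    by (simp add: point_vec_def vec_eq_iff forall_4 field_simps power2_eq_square)
qed

lemma row_pair_sum_neq_zero:
  assumes W: "descartes_matrix W" and "i \<noteq> j" shows "W$i + W$j \<noteq> 0"
proof
  assume "W$i + W$j = 0"
  obtain k l where d: "distinct [i, j, k, l]" using ex_distinct_4[OF \<open>i \<noteq> j\<close>] by blast
  then show False
    using distinct_4_neq[OF d] descartes_matrixD[OF W, of k i] descartes_matrixD[OF W, of k j]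
      arg_cong[OF \<open>W$i + W$j = 0\<close>, of "lorentz (W$k)"]
    by (simp add: lorentz_bilinear)
qed

lemma tangent_at_tangency_point_finite:
  assumes v: "\<And>k. valid_oc (C k)" and W: "descartes_matrix (Wmat C)" and "i \<noteq> j"
    and finite: "(wcoord (C i) + wcoord (C j))$2 \<noteq> 0"
  shows "tangent_at (C i) (C j) (tangency_point (Wmat C) i j)"
proof -
  define n where "n = wcoord (C i) + wcoord (C j)"
  have n: "lorentz n n = 0" "lorentz (wcoord (C i)) n = 0" "lorentz (wcoord (C j)) n = 0"
    using lorentz_row_pair_sum[OF W \<open>i \<noteq> j\<close>] by (simp_all add: n_def)
  have n2: "n$2 \<noteq> 0" using finite by (simp add: n_def)
  define x where "x = (vector [n$3 / n$2, n$4 / n$2] :: real^2)"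
  have px: "point_vec x = (1 / n$2) *\<^sub>R n"
    unfolding x_def by (rule point_vec_of_null_vector[OF n2 n(1)])
  have "x \<in> supp (C i)" "x \<in> supp (C j)"
    using mem_supp_iff_lorentz[OF v] px n by (simp_all add: lorentz_bilinear)
  moreover have "z = x" if z: "z \<in> supp (C i)" "z \<in> supp (C j)" for z
  proof -
    obtain t where t: "point_vec z = t *\<^sub>R n"
      using common_point_vec[OF v W \<open>i \<noteq> j\<close> z] unfolding n_def by metis
    then have "(point_vec z)$2 = t * n$2" by simp
    then have "1 = t * n$2" by (simp add: point_vec_def)
    then have "point_vec z = point_vec x" using t px n2 by (simp add: field_simps)
    then show ?thesis by (rule point_vec_inj)
  qed
  ultimately have "supp (C i) \<inter> supp (C j) = {x}" by blast
  moreover have "\<not> (is_line (C i) \<and> is_line (C j))"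
    using finite is_line_iff_wcoord[OF v] by auto
  moreover have "tangency_point (Wmat C) i j = Some x"
    using finite by (simp add: tangency_point_def x_def n_def Let_def)
  ultimately show ?thesis by (simp add: tangent_at_def)
qed

lemma tangent_at_tangency_point_infinite:
  assumes v: "\<And>k. valid_oc (C k)" and W: "descartes_matrix (Wmat C)" and "i \<noteq> j"
    and infinite: "(wcoord (C i) + wcoord (C j))$2 = 0"
  shows "tangent_at (C i) (C j) (tangency_point (Wmat C) i j)"
proof -
  define n where "n = wcoord (C i) + wcoord (C j)"
  have n: "lorentz n n = 0" "lorentz (wcoord (C i)) n = 0" "lorentz (wcoord (C j)) n = 0"
    using lorentz_row_pair_sum[OF W \<open>i \<noteq> j\<close>] by (simp_all add: n_def)
  have n2: "n$2 = 0" using infinite by (simp add: n_def)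
  then have "n$3 ^ 2 + n$4 ^ 2 = 0"
    using n(1) by (simp add: lorentz_def power2_eq_square)
  then have "n = n$1 *\<^sub>R infinity_vec"
    using n2 by (simp add: infinity_vec_def vec_eq_iff forall_4)
  moreover have "n \<noteq> 0"
    using row_pair_sum_neq_zero[OF W \<open>i \<noteq> j\<close>] by (simp add: n_def)
  ultimately obtain c where "c \<noteq> 0" "n = c *\<^sub>R infinity_vec" by (metis scale_zero_left)
  then have "lorentz (wcoord (C i)) infinity_vec = 0" "lorentz (wcoord (C j)) infinity_vec = 0"
    using n(2,3) by (simp_all add: lorentz_bilinear)
  then have "is_line (C i)" "is_line (C j)"
    using is_line_iff_wcoord[OF v] by (simp_all add: lorentz_infinity_vec)
  moreover have "supp (C i) \<inter> supp (C j) = {}"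
  proof (rule ccontr)
    assume "supp (C i) \<inter> supp (C j) \<noteq> {}"
    then obtain t z where "point_vec z = t *\<^sub>R n"
      using common_point_vec[OF v W \<open>i \<noteq> j\<close>] unfolding n_def by (metis disjoint_iff)
    then have "(point_vec z)$2 = t * n$2" by simp
    then show False using n2 by (simp add: point_vec_def)
  qed
  ultimately show ?thesis
    using infinite by (simp add: tangent_at_def tangency_point_def Let_def)
qed

lemma tangent_at_tangency_point:
  assumes "\<And>k. valid_oc (C k)" and "descartes_matrix (Wmat C)" and "i \<noteq> j"
  shows "tangent_at (C i) (C j) (tangency_point (Wmat C) i j)"
  using tangent_at_tangency_point_finite[OF assms] tangent_at_tangency_point_infinite[OF assms]
  by blast

lemma descartes_matrix_imp_oriented_descartes:
  assumes v: "\<And>k. valid_oc (C k)" and W: "descartes_matrix (Wmat C)"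
  shows "oriented_descartes C"
proof -
  let ?P = "tangency_point (Wmat C)"
  have "{i, j} = {k, l}" if "i \<noteq> j" "k \<noteq> l" "?P i j = ?P k l" for i j k l
  proof -
    obtain a where a: "a \<noteq> 0" "ext_point_vec (?P i j) = a *\<^sub>R (wcoord (C i) + wcoord (C j))"
      using tangency_ext_point_vec[OF v W \<open>i \<noteq> j\<close> tangent_at_tangency_point[OF v W \<open>i \<noteq> j\<close>]] .
    obtain b where b: "ext_point_vec (?P k l) = b *\<^sub>R (wcoord (C k) + wcoord (C l))"
      using tangency_ext_point_vec[OF v W \<open>k \<noteq> l\<close> tangent_at_tangency_point[OF v W \<open>k \<noteq> l\<close>]] .
    have "a *\<^sub>R (wcoord (C i) + wcoord (C j)) = b *\<^sub>R (wcoord (C k) + wcoord (C l))"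
      using a(2) b that(3) by metis
    then show ?thesis
      using row_pair_sums_proportional[OF W that(1,2) a(1), of b] by simp
  qed
  then have "descartes C"
    unfolding descartes_def using v tangent_at_tangency_point[OF v W] by blast
  moreover have "pairwise_disjoint_interiors C \<or> pairwise_disjoint_interiors (orev \<circ> C)"
  proof (cases "(\<Sum>k\<in>UNIV. wcoord (C k) $ 2) > 0")
    case True
    then show ?thesis using disjoint_interiors_if_curvature_sum_pos[OF v W] by blast
  next
    case False
    then have "(\<Sum>k\<in>UNIV. wcoord ((orev \<circ> C) k) $ 2) > 0"
      using curvature_sum_neq_zero[OF W] by (simp add: wcoord_orev sum_negf)
    moreover have "descartes_matrix (Wmat (orev \<circ> C))"
      using descartes_matrix_uminus[OF W] by (simp add: Wmat_orev)
    ultimately show ?thesis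
      using disjoint_interiors_if_curvature_sum_pos[of "orev \<circ> C"] v by simp
  qed
  ultimately show ?thesis by (simp add: oriented_descartes_def)
qed

section \<open>Words in the generators\<close>

lemma Smat_nth: "Smat i $ r $ c = (if r = i then (if c = i then -1 else 2) else (if r = c then 1 else 0))"
  by (simp add: Smat_def)

lemma Smat_mult_vec_nth:
  "(Smat i *v x) $ r = (if r = i then 2 * (\<Sum>m\<in>UNIV - {i}. x$m) - x$i else x$r)"
proof (cases "r = i")
  case True
  have "(Smat i *v x) $ r = (\<Sum>k\<in>UNIV. (if k = i then -1 else 2) * x$k)"
    using True by (simp add: matrix_vector_mult_def Smat_nth)
  also have "\<dots> = - x$i + (\<Sum>k\<in>UNIV - {i}. (if k = i then -1 else 2) * x$k)"
    by (subst sum.remove[of _ i]) auto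
  also have "(\<Sum>k\<in>UNIV - {i}. (if k = i then -1 else 2) * x$k) = (\<Sum>k\<in>UNIV - {i}. 2 * x$k)"
    by (rule sum.cong) auto
  finally show ?thesis using True by (simp add: sum_distrib_left)
next
  case False
  have "(Smat i *v x) $ r = (\<Sum>k\<in>UNIV. Smat i $ r $ k * x$k)"
    by (simp add: matrix_vector_mult_def)
  also have "\<dots> = (\<Sum>k\<in>UNIV. (if r = k then x$k else 0))"
    by (rule sum.cong) (auto simp: Smat_nth False)
  finally show ?thesis using False by simp
qed

lemma Smat_mult_row:
  "(Smat i ** M) $ r = (if r = i then 2 *\<^sub>R (\<Sum>m\<in>UNIV - {i}. M$m) - M$i else M$r)"
proof -
  have "(Smat i ** M) $ r $ c = (Smat i *v (\<chi> k. M$k$c)) $ r" for c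
    by (simp add: matrix_matrix_mult_def matrix_vector_mult_def)
  then show ?thesis
    by (simp add: vec_eq_iff Smat_mult_vec_nth)
qed

lemma Smat_mult_Smat: "Smat i ** Smat i = mat 1"
  using exhaust_4[of i]
  by (auto simp: vec_eq_iff forall_4 matrix_matrix_mult_def sum_4 Smat_nth mat_def)

primrec Sprod :: "4 list \<Rightarrow> real^4^4" where
  "Sprod [] = mat 1"
| "Sprod (i # l) = Smat i ** Sprod l"

lemma Sprod_append: "Sprod (l1 @ l2) = Sprod l1 ** Sprod l2"
  by (induction l1) (simp_all add: matrix_mul_assoc)

lemma Sprod_rev_mult: "Sprod (rev l) ** Sprod l = mat 1"
proof (induction l)
  case (Cons i l)
  have "Sprod (rev (i # l)) ** Sprod (i # l) = Sprod (rev l) ** ((Smat i ** Smat i) ** Sprod l)"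
    by (simp add: Sprod_append matrix_mul_assoc)
  then show ?case using Cons by (simp add: Smat_mult_Smat)
qed simp

lemma Sprod_mult_rev: "Sprod l ** Sprod (rev l) = mat 1"
  using Sprod_rev_mult[of l] matrix_left_right_inverse by blast

lemma Sprod_rev_cancel: "Sprod (rev l) ** (Sprod l ** W) = W"
  by (simp add: matrix_mul_assoc Sprod_rev_mult)

lemma matrix_inv_eqI:
  fixes A B :: "'a::comm_ring_1^'n^'n"
  assumes "A ** B = mat 1" "B ** A = mat 1" shows "matrix_inv A = B"
  unfolding matrix_inv_def
proof (rule some_equality)
  fix C assume C: "A ** C = mat 1 \<and> C ** A = mat 1"
  have "C = C ** (A ** B)" using assms(1) by simp
  also have "\<dots> = (C ** A) ** B" by (simp add: matrix_mul_assoc)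
  finally show "C = B" using C by simp
qed (use assms in simp)

lemma apollonian_group_eq: "apollonian_group = range Sprod"
proof (intro set_eqI iffI)
  fix U assume "U \<in> apollonian_group"
  then show "U \<in> range Sprod"
  proof (induction rule: apollonian_group.induct)
    case one show ?case by (rule range_eqI[of _ _ "[]"]) simp
  next
    case (gen i) show ?case by (rule range_eqI[of _ _ "[i]"]) simp
  next
    case (mult U V)
    then obtain l1 l2 where "U = Sprod l1" "V = Sprod l2" by blast
    then show ?case by (intro range_eqI[of _ _ "l1 @ l2"]) (simp add: Sprod_append)
  next
  case (inv U)
    then obtain l where "U = Sprod l" by blast
    then have "matrix_inv U = Sprod (rev l)"
      using matrix_inv_eqI Sprod_rev_mult Sprod_mult_rev by blast
    then show ?case by simp
  qed
next
  fix U assume "U \<in> range Sprod"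
  then obtain l where "U = Sprod l" by blast
  then show "U \<in> apollonian_group"
    by (induction l arbitrary: U) (auto intro: apollonian_group.intros)
qed

lemma lorentz_Smat_row:
  assumes W: "descartes_matrix W"
  shows "lorentz ((Smat i ** W) $ i) (W$s) = (if s = i then -7/2 else -1/2)"
proof -
  obtain j k l where d: "distinct [i, j, k, l]" using ex_distinct_4_from by blast
  have "(Smat i ** W) $ i = 2 *\<^sub>R (W$j + W$k + W$l) - W$i"
    unfolding Smat_mult_row sum_Diff_distinct_4[OF d] by simp
  then have "lorentz ((Smat i ** W) $ i) (W$s)
      = 2 * (lorentz (W$j) (W$s) + lorentz (W$k) (W$s) + lorentz (W$l) (W$s)) - lorentz (W$i) (W$s)"
    by (simp add: lorentz_bilinear)
  moreover have "s = i \<or> s = j \<or> s = k \<or> s = l" using UNIV_distinct_4[OF d] by auto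
  ultimately show ?thesis
    using distinct_4_neq[OF d] by (auto simp: descartes_matrixD[OF W])
qed

lemma descartes_matrix_Smat:
  assumes W: "descartes_matrix W" shows "descartes_matrix (Smat i ** W)"
proof -
  obtain j k l where d: "distinct [i, j, k, l]" using ex_distinct_4_from by blast
  define v where "v = (Smat i ** W) $ i"
  have row: "(Smat i ** W) $ r = (if r = i then v else W$r)" for r
    by (cases "r = i") (simp_all add: v_def Smat_mult_row)
  have "v = 2 *\<^sub>R (W$j + W$k + W$l) - W$i"
    unfolding v_def Smat_mult_row sum_Diff_distinct_4[OF d] by simp
  then have "lorentz v v = 2 * (lorentz v (W$j) + lorentz v (W$k) + lorentz v (W$l)) - lorentz v (W$i)"
    by (simp add: lorentz_bilinear)
  then have "lorentz v v = 1/2"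
    using lorentz_Smat_row[OF W, of i] distinct_4_neq[OF d] by (simp add: v_def)
  moreover have "lorentz v (W$s) = -1/2" "lorentz (W$s) v = -1/2" if "s \<noteq> i" for s
    using lorentz_Smat_row[OF W, of i s] that lorentz_commute by (simp_all add: v_def)
  ultimately show ?thesis
    using W by (auto simp: descartes_matrix_def row)
qed

text \<open>The \<open>S\<^sub>i\<close> preserve the Descartes form \<open>\<Sum>x\<^sub>k\<^sup>2 - (\<Sum>x\<^sub>k)\<^sup>2/2\<close>, and where this form is
  negative, \<open>x\<^sub>i\<^sup>2 < (\<Sum>x\<^sub>k)\<^sup>2/2\<close> forces \<open>4 x\<^sub>i < 3 \<Sum>x\<^sub>k\<close>, so the reflected sum
  \<open>3 \<Sum>x\<^sub>k - 4 x\<^sub>i\<close> stays positive.\<close>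

definition descartes_cone :: "(real^4) set" where
  "descartes_cone = {x. 0 < (\<Sum>k\<in>UNIV. x$k) \<and> (\<Sum>k\<in>UNIV. (x$k)\<^sup>2) < (\<Sum>k\<in>UNIV. x$k)\<^sup>2 / 2}"

lemma reflection_preserves_descartes_cone:
  fixes a b c d :: real
  assumes "a + b + c + d > 0" "a\<^sup>2 + b\<^sup>2 + c\<^sup>2 + d\<^sup>2 < (a + b + c + d)\<^sup>2 / 2"
  defines "a' \<equiv> 2 * (b + c + d) - a"
  shows "a' + b + c + d > 0" "a'\<^sup>2 + b\<^sup>2 + c\<^sup>2 + d\<^sup>2 < (a' + b + c + d)\<^sup>2 / 2"
proof -
  define S where "S = a + b + c + d"
  have "a\<^sup>2 < S\<^sup>2 / 2"
    using assms(2) unfolding S_def by (smt (verit) zero_le_power2)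
  moreover have "(4 * a)\<^sup>2 = 16 * a\<^sup>2" "(3 * S)\<^sup>2 = 9 * S\<^sup>2" "0 \<le> S\<^sup>2"
    by (simp_all add: power2_eq_square)
  ultimately have "(4 * a)\<^sup>2 < (3 * S)\<^sup>2" by linarith
  then have "4 * a < 3 * S"
    using assms(1) power2_less_imp_less[of "4 * a" "3 * S"] by (simp add: S_def)
  then show "a' + b + c + d > 0" by (simp add: a'_def S_def)
  have "a'\<^sup>2 + b\<^sup>2 + c\<^sup>2 + d\<^sup>2 - (a' + b + c + d)\<^sup>2 / 2 = a\<^sup>2 + b\<^sup>2 + c\<^sup>2 + d\<^sup>2 - (a + b + c + d)\<^sup>2 / 2"
    by (simp add: a'_def power2_eq_square field_simps)
  then show "a'\<^sup>2 + b\<^sup>2 + c\<^sup>2 + d\<^sup>2 < (a' + b + c + d)\<^sup>2 / 2" using assms(2) by linarith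
qed

lemma Smat_mult_vec_descartes_cone:
  assumes "x \<in> descartes_cone" shows "Smat i *v x \<in> descartes_cone"
proof -
  obtain j k l where d: "distinct [i, j, k, l]" using ex_distinct_4_from by blast
  have y: "(Smat i *v x) $ r = (if r = i then 2 * (x$j + x$k + x$l) - x$i else x$r)" for r
    unfolding Smat_mult_vec_nth sum_Diff_distinct_4[OF d] by simp
  show ?thesis
    using reflection_preserves_descartes_cone[of "x$i" "x$j" "x$k" "x$l"] assms distinct_4_neq[OF d]
    unfolding descartes_cone_def sum_UNIV_distinct_4[OF d] by (simp add: y)
qed

lemma Sprod_mult_vec_descartes_cone: "x \<in> descartes_cone \<Longrightarrow> Sprod l *v x \<in> descartes_cone"
  by (induction l) (simp_all add: Smat_mult_vec_descartes_cone flip: matrix_vector_mul_assoc)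

lemma Sprod_congruent_mat_1_mod_2: "(Sprod l $ r $ c - mat 1 $ r $ c) / 2 \<in> \<int>"
proof (induction l arbitrary: r c)
  case (Cons i l)
  let ?U = "Sprod l"
  have int: "?U $ m $ c \<in> \<int>" for m
  proof -
    have "?U $ m $ c = 2 * ((?U $ m $ c - mat 1 $ m $ c) / 2) + mat 1 $ m $ c"
      by (simp add: field_simps)
    also have "\<dots> \<in> \<int>"
      using Cons.IH by (intro Ints_add Ints_mult) (auto simp: mat_def)
    finally show ?thesis .
  qed
  show ?case
  proof (cases "r = i")
    case True
    then have eq: "(Sprod (i # l) $ r $ c - mat 1 $ r $ c) / 2
        = (\<Sum>m\<in>UNIV - {i}. ?U $ m $ c) - (?U $ i $ c - mat 1 $ i $ c) / 2 - mat 1 $ i $ c"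
      by (simp add: Smat_mult_row field_simps)
    show ?thesis
      unfolding eq using Cons.IH int by (intro Ints_diff Ints_sum) (auto simp: mat_def)
  next
    case False
    then show ?thesis using Cons.IH by (simp add: Smat_mult_row)
  qed
qed simp

lemma matrix_mult_row: "((A :: real^'n^'m) ** B) $ k = (\<Sum>m\<in>UNIV. A$k$m *\<^sub>R B$m)"
  by (simp add: vec_eq_iff matrix_matrix_mult_def)

lemma mult_descartes_matrix_signed_permutation:
  assumes W: "descartes_matrix W" and perm: "\<And>k. (U ** W) $ k = s *\<^sub>R W $ (\<pi> k)"
  shows "U $ k $ m = (if m = \<pi> k then s else 0)"
proof -
  have "(\<Sum>m\<in>UNIV. (if m = \<pi> k then s else 0) *\<^sub>R W $ m) = (\<Sum>m\<in>UNIV. if m = \<pi> k then s *\<^sub>R W $ m else 0)"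
    by (rule sum.cong) auto
  then have "(\<Sum>m\<in>UNIV. U $ k $ m *\<^sub>R W $ m) = (\<Sum>m\<in>UNIV. (if m = \<pi> k then s else 0) *\<^sub>R W $ m)"
    using perm[of k] by (simp add: matrix_mult_row)
  then have "(\<Sum>m\<in>UNIV. (U $ k $ m - (if m = \<pi> k then s else 0)) *\<^sub>R W $ m) = 0"
    by (simp add: scaleR_diff_left sum_subtractf)
  then show ?thesis
    using descartes_matrix_rows_independent[OF W, of "\<lambda>m. U $ k $ m - (if m = \<pi> k then s else 0)" m]
    by simp
qed

lemma Sprod_signed_permutation_imp_id:
  assumes W: "descartes_matrix W" and s: "s = 1 \<or> s = -1"
    and perm: "\<And>k. (Sprod l ** W) $ k = s *\<^sub>R W $ (\<pi> k)"
  shows "s = 1 \<and> \<pi> = id"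
proof -
  let ?U = "Sprod l"
  note U = mult_descartes_matrix_signed_permutation[OF W perm]
  have "\<pi> k = k" for k
  proof (rule ccontr)
    assume "\<pi> k \<noteq> k"
    then have "(?U $ k $ k - mat 1 $ k $ k) / 2 = - 1 / 2" by (simp add: U mat_def)
    moreover have "- 1 / 2 \<notin> (\<int> :: real set)"
    proof
      assume "- 1 / 2 \<in> (\<int> :: real set)"
      then obtain n where "- 1 / 2 = real_of_int n" by (auto elim: Ints_cases)
      then have "real_of_int (2 * n) = real_of_int (- 1)" by simp
      then have "2 * n = - 1" by (simp only: of_int_eq_iff)
      then show False by presburger
    qed
    ultimately show False using Sprod_congruent_mat_1_mod_2[of l k k] by simp
  qed
  then have "\<pi> = id" by auto
  moreover have "s = 1"
  proof (rule ccontr)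
    assume "s \<noteq> 1"
    then have "?U *v 1 = - 1"
      using s \<open>\<pi> = id\<close> by (simp add: vec_eq_iff matrix_vector_mult_def U)
    moreover have "(1 :: real^4) \<in> descartes_cone" "- (1 :: real^4) \<notin> descartes_cone"
      by (simp_all add: descartes_cone_def sum_4)
    ultimately show False using Sprod_mult_vec_descartes_cone[of 1 l] by simp
  qed
  ultimately show ?thesis by simp
qed

section \<open>Replacement is multiplication by a generator\<close>

lemma Wmat_inj:
  assumes "\<And>k. valid_oc (X k)" "\<And>k. valid_oc (Y k)" "Wmat X = Wmat Y" shows "X = Y"
proof
  fix k
  have "wcoord (X k) = wcoord (Y k)" using arg_cong[OF assms(3), of "\<lambda>W. W $ k"] by simp
  then show "X k = Y k" using wcoord_inj assms(1,2) by blast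
qed

text \<open>The two solutions in Descartes' theorem.\<close>

lemma descartes_matrix_row_cases:
  assumes W: "descartes_matrix W" and v: "lorentz v v = 1/2"
    and others: "\<And>m. m \<noteq> i \<Longrightarrow> lorentz (W$m) v = -1/2"
  shows "v = W$i \<or> v = (Smat i ** W) $ i"
proof -
  obtain j k l where d: "distinct [i, j, k, l]" using ex_distinct_4_from by blast
  note neq = distinct_4_neq[OF d]
  define x where "x = pairing W v i"
  have S: "pairing_sum W v = x - 3/2"
    unfolding pairing_sum_def sum_UNIV_distinct_4[OF d] x_def using others neq
    by (simp add: pairing_def)
  have "1/2 = x\<^sup>2 + 3/4 - (x - 3/2)\<^sup>2 / 2"
    using lorentz_via_pairings[OF W, of v v] v others neq
    unfolding sum_UNIV_distinct_4[OF d] S by (simp add: x_def pairing_def power2_eq_square)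
  then have "(2 * x - 1) * (2 * x + 7) = 0" by (simp add: power2_eq_square field_simps)
  then consider "x = 1/2" | "x = -7/2" by auto
  moreover have v: "v = (x - (x - 3/2) / 2) *\<^sub>R W$i + (-1/2 - (x - 3/2) / 2) *\<^sub>R (W$j + W$k + W$l)"
    using descartes_matrix_expansion[OF W, of v] others neq
    unfolding sum_UNIV_distinct_4[OF d] S by (simp add: x_def pairing_def scaleR_add_right add.assoc)
  moreover have "(Smat i ** W) $ i = 2 *\<^sub>R (W$j + W$k + W$l) - W$i"
    unfolding Smat_mult_row sum_Diff_distinct_4[OF d] by simp
  ultimately show ?thesis
  proof cases
    case 1
    show ?thesis by (simp add: v \<open>x = 1/2\<close>)
  next
    case 2
    then have "v = 2 *\<^sub>R (W$j + W$k + W$l) - W$i" by (simp add: v algebra_simps)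
    with \<open>(Smat i ** W) $ i = 2 *\<^sub>R (W$j + W$k + W$l) - W$i\<close> show ?thesis by simp
  qed
qed

lemma replaces_imp_Wmat:
  assumes "replaces i D1 D2" shows "Wmat D2 = Smat i ** Wmat D1"
proof -
  have od1: "oriented_descartes D1" and od2: "oriented_descartes D2"
    and same: "\<And>j. j \<noteq> i \<Longrightarrow> D2 j = D1 j" and new: "supp (D2 i) \<noteq> supp (D1 i)"
    using assms by (auto simp: replaces_def)
  have W1: "descartes_matrix (Wmat D1)" and W2: "descartes_matrix (Wmat D2)"
    using oriented_descartes_imp_descartes_matrix od1 od2 by blast+
  have "wcoord (D2 i) = wcoord (D1 i) \<or> wcoord (D2 i) = (Smat i ** Wmat D1) $ i"
    using descartes_matrix_row_cases[OF W1, of "wcoord (D2 i)" i] same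
      descartes_matrixD[OF W2, of i] descartes_matrixD[OF W2, of _ i]
    by (metis Wmat_nth)
  moreover have "wcoord (D2 i) \<noteq> wcoord (D1 i)"
    using new wcoord_inj oriented_descartes_valid od1 od2 by metis
  ultimately have "wcoord (D2 i) = (Smat i ** Wmat D1) $ i" by blast
  then show ?thesis
    using same by (auto simp: vec_eq_iff Smat_mult_row)
qed

lemma Wmat_fun_upd_Smat_row:
  "wcoord C = (Smat i ** Wmat D) $ i \<Longrightarrow> Wmat (D(i := C)) = Smat i ** Wmat D"
  by (auto simp: vec_eq_iff Smat_mult_row)

lemma oriented_descartes_fun_upd_Smat_row:
  assumes "oriented_descartes D" "valid_oc C" "wcoord C = (Smat i ** Wmat D) $ i"
  shows "oriented_descartes (D(i := C))"
proof -
  have "descartes_matrix (Wmat (D(i := C)))"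
    using descartes_matrix_Smat[OF oriented_descartes_imp_descartes_matrix[OF assms(1)]]
      Wmat_fun_upd_Smat_row[OF assms(3)] by simp
  moreover have "valid_oc ((D(i := C)) k)" for k
    using oriented_descartes_valid[OF assms(1)] assms(2) by simp
  ultimately show ?thesis using descartes_matrix_imp_oriented_descartes by blast
qed

lemma replacement_new_tangency_points:
  assumes od1: "oriented_descartes D1" and C: "valid_oc C" "wcoord C = (Smat i ** Wmat D1) $ i"
    and "j \<noteq> i" and T1: "tangent_at (D1 i) (D1 j) p" and T2: "tangent_at C (D1 j) q"
  shows "p \<noteq> q"
proof
  assume "p = q"
  define D2 where "D2 = D1(i := C)"
  have W1: "descartes_matrix (Wmat D1)" and W2: "descartes_matrix (Wmat D2)"
    using oriented_descartes_imp_descartes_matrix od1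
      oriented_descartes_fun_upd_Smat_row[OF od1 C] by (auto simp: D2_def)
  obtain a where "ext_point_vec p = a *\<^sub>R (wcoord (D1 i) + wcoord (D1 j))"
    using tangency_ext_point_vec[of D1, OF oriented_descartes_valid[OF od1] W1 _ T1] \<open>j \<noteq> i\<close>
    by metis
  moreover have "tangent_at (D2 i) (D2 j) q" using T2 \<open>j \<noteq> i\<close> by (simp add: D2_def)
  then obtain b where "b \<noteq> 0" "ext_point_vec q = b *\<^sub>R (wcoord (D2 i) + wcoord (D2 j))"
    using tangency_ext_point_vec[of D2, OF _ W2] oriented_descartes_valid[OF od1] C(1) \<open>j \<noteq> i\<close>
    by (metis D2_def fun_upd_apply)
  ultimately have "a *\<^sub>R (wcoord (D1 i) + wcoord (D1 j)) = b *\<^sub>R (wcoord C + wcoord (D1 j))"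
    using \<open>p = q\<close> \<open>j \<noteq> i\<close> by (simp add: D2_def)
  then have eq: "a * lorentz (wcoord (D1 i)) (wcoord (D1 i) + wcoord (D1 j))
      = b * lorentz (wcoord (D1 i)) (wcoord C + wcoord (D1 j))"
    by (metis lorentz_bilinear(8))
  have vals: "lorentz (wcoord (D1 i)) (wcoord (D1 i)) = 1/2"
    "lorentz (wcoord (D1 i)) (wcoord (D1 j)) = -1/2" "lorentz (wcoord (D1 i)) (wcoord C) = -7/2"
    using descartes_matrixD[OF W1, of i i] descartes_matrixD[OF W1, of i j] \<open>j \<noteq> i\<close>
      lorentz_Smat_row[OF W1, of i i] C(2) lorentz_commute by auto
  show False
    using \<open>b \<noteq> 0\<close> eq by (simp add: lorentz_bilinear vals)
qed

lemma replaces_fun_upd_Smat_row: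
  assumes od1: "oriented_descartes D1" and C: "valid_oc C" "wcoord C = (Smat i ** Wmat D1) $ i"
  shows "replaces i D1 (D1(i := C))"
proof -
  have v1: "valid_oc (D1 i)" using oriented_descartes_valid[OF od1] .
  have W1: "descartes_matrix (Wmat D1)"
    using oriented_descartes_imp_descartes_matrix[OF od1] .
  have "supp C \<noteq> supp (D1 i)"
  proof
    assume "supp C = supp (D1 i)"
    then have "wcoord C = wcoord (D1 i) \<or> wcoord C = - wcoord (D1 i)"
      using supp_eq_imp_eq_or_orev[OF v1 C(1)] by (auto simp: wcoord_orev)
    then show False
      using lorentz_Smat_row[OF W1, of i i] C(2) lorentz_wcoord_self[OF v1]
      by (auto simp: lorentz_bilinear)
  qed
  then show ?thesis
    using od1 oriented_descartes_fun_upd_Smat_row[OF assms] replacement_new_tangency_points[OF assms]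
    by (simp add: replaces_def)
qed

lemma ex_replaces:
  assumes "oriented_descartes D1"
  obtains D2 where "replaces i D1 D2" "Wmat D2 = Smat i ** Wmat D1"
proof -
  have "lorentz ((Smat i ** Wmat D1) $ i) ((Smat i ** Wmat D1) $ i) = 1/2"
    using descartes_matrixD[OF descartes_matrix_Smat[OF oriented_descartes_imp_descartes_matrix[OF assms]]]
    by simp
  then obtain C where "valid_oc C" "wcoord C = (Smat i ** Wmat D1) $ i"
    using ex_wcoord_eq by blast
  then show ?thesis
    using replaces_fun_upd_Smat_row[OF assms] Wmat_fun_upd_Smat_row that by blast
qed

section \<open>Relabelling\<close>

definition relabel :: "bool \<Rightarrow> (4 \<Rightarrow> 4) \<Rightarrow> config \<Rightarrow> config" where
  "relabel s \<pi> X = (\<lambda>k. if s then X (\<pi> k) else orev (X (\<pi> k)))"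

lemma wcoord_relabel: "wcoord (relabel s \<pi> X k) = (if s then 1 else -1) *\<^sub>R wcoord (X (\<pi> k))"
  by (simp add: relabel_def wcoord_orev)

lemma relabel_True_id [simp]: "relabel True id X = X"
  by (simp add: relabel_def)

lemma oriented_descartes_relabel:
  assumes X: "oriented_descartes X" and "inj \<pi>" shows "oriented_descartes (relabel s \<pi> X)"
proof -
  have "descartes_matrix (Wmat (relabel s \<pi> X))"
    using descartes_matrixD[OF oriented_descartes_imp_descartes_matrix[OF X]] \<open>inj \<pi>\<close>
    by (cases s) (simp_all add: descartes_matrix_def wcoord_relabel lorentz_bilinear inj_eq)
  moreover have "valid_oc (relabel s \<pi> X k)" for k
    using oriented_descartes_valid[OF X] by (simp add: relabel_def)
  ultimately show ?thesis using descartes_matrix_imp_oriented_descartes by blast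
qed

lemma underlying_relabel: "surj \<pi> \<Longrightarrow> underlying (relabel s \<pi> X) = underlying X"
  by (simp add: underlying_def relabel_def image_image flip: image_comp) (metis image_image)

lemma Wmat_relabel_Smat:
  assumes "bij \<pi>" and "Wmat X' = Smat j ** Wmat X"
  shows "Wmat (relabel s \<pi> X') = Smat (inv \<pi> j) ** Wmat (relabel s \<pi> X)"
proof -
  have j: "\<pi> k = j \<longleftrightarrow> k = inv \<pi> j" for k
    using assms(1) by (metis bij_inv_eq_iff)
  have X': "wcoord (X' m) = (if m = j then 2 *\<^sub>R ((\<Sum>m\<in>UNIV. wcoord (X m)) - wcoord (X j)) - wcoord (X j)
      else wcoord (X m))" for m
    using arg_cong[OF assms(2), of "\<lambda>W. W $ m"] by (simp add: Smat_mult_row sum_diff1)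
  have "(\<Sum>m\<in>UNIV. wcoord (X (\<pi> m))) = (\<Sum>m\<in>UNIV. wcoord (X m))"
    using sum.permute[OF bij_imp_permutes[OF assms(1)], of "\<lambda>m. wcoord (X m)", symmetric]
    by (simp add: comp_def)
  then have "(\<Sum>m\<in>UNIV. wcoord (relabel s \<pi> X m)) = (if s then 1 else -1) *\<^sub>R (\<Sum>m\<in>UNIV. wcoord (X m))"
    by (simp add: wcoord_relabel flip: scaleR_sum_right)
  then have "Wmat (relabel s \<pi> X') $ k = (Smat (inv \<pi> j) ** Wmat (relabel s \<pi> X)) $ k" for k
    using X'[of "\<pi> k"] j[of k]
    by (cases s; cases "k = inv \<pi> j") (auto simp: Smat_mult_row sum_diff1 wcoord_relabel algebra_simps)
  then show ?thesis by (simp add: vec_eq_iff)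
qed

lemma F_orbit_self: "D \<in> F_orbit D"
  by (simp add: F_orbit_def)

lemma F_orbit_replaces: "X \<in> F_orbit D \<Longrightarrow> replaces i X Y \<Longrightarrow> Y \<in> F_orbit D"
  unfolding F_orbit_def replacement_step_def by (auto intro: rtranclp.rtrancl_into_rtrancl)

lemma F_orbit_induct [consumes 1, case_names self replaces]:
  assumes "X \<in> F_orbit D" "P D" "\<And>Y Z i. Y \<in> F_orbit D \<Longrightarrow> P Y \<Longrightarrow> replaces i Y Z \<Longrightarrow> P Z"
  shows "P X"
  using assms(1) unfolding F_orbit_def mem_Collect_eq
  by (induction rule: rtranclp_induct)
    (use assms(2,3) in \<open>auto simp: F_orbit_def replacement_step_def\<close>)

lemma F_orbit_oriented_descartes:
  assumes "oriented_descartes D" "X \<in> F_orbit D" shows "oriented_descartes X"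
  using assms(2) by (induction rule: F_orbit_induct) (use assms(1) in \<open>auto simp: replaces_def\<close>)

lemma F_orbit_relabel_Wmat:
  assumes "X \<in> F_orbit D" and "bij \<pi>"
  shows "\<exists>l. Wmat (relabel s \<pi> X) = Sprod l ** Wmat (relabel s \<pi> D)"
  using assms(1)
proof (induction rule: F_orbit_induct)
  case self
  show ?case by (rule exI[of _ "[]"]) simp
next
  case (replaces Y Z i)
  then obtain l where "Wmat (relabel s \<pi> Y) = Sprod l ** Wmat (relabel s \<pi> D)" by blast
  then have "Wmat (relabel s \<pi> Z) = Sprod (inv \<pi> i # l) ** Wmat (relabel s \<pi> D)"
    using Wmat_relabel_Smat[OF assms(2) replaces_imp_Wmat[OF \<open>replaces i Y Z\<close>]]
    by (simp add: matrix_mul_assoc)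
  then show ?case ..
qed

lemma F_orbit_Wmat: "X \<in> F_orbit D \<Longrightarrow> \<exists>l. Wmat X = Sprod l ** Wmat D"
  using F_orbit_relabel_Wmat[of X D id True] by simp

lemma F_orbit_relabel_Sprod:
  assumes D: "oriented_descartes D" and "Y \<in> F_orbit D" and "bij \<pi>"
  shows "\<exists>Y' \<in> F_orbit D. Wmat (relabel s \<pi> Y') = Sprod l ** Wmat (relabel s \<pi> Y)"
proof (induction l)
  case Nil
  show ?case using \<open>Y \<in> F_orbit D\<close> by auto
next
  case (Cons i l)
  then obtain Y' where Y': "Y' \<in> F_orbit D" "Wmat (relabel s \<pi> Y') = Sprod l ** Wmat (relabel s \<pi> Y)"
    by blast
  obtain Y'' where R: "replaces (\<pi> i) Y' Y''" "Wmat Y'' = Smat (\<pi> i) ** Wmat Y'"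
    using ex_replaces[OF F_orbit_oriented_descartes[OF D Y'(1)]] by blast
  have "inv \<pi> (\<pi> i) = i" using \<open>bij \<pi>\<close> by (simp add: bij_is_inj)
  then have "Wmat (relabel s \<pi> Y'') = Sprod (i # l) ** Wmat (relabel s \<pi> Y)"
    using Wmat_relabel_Smat[OF \<open>bij \<pi>\<close> R(2)] Y'(2) by (simp add: matrix_mul_assoc)
  then show ?case using F_orbit_replaces[OF Y'(1) R(1)] by blast
qed

lemma oriented_descartes_supp_inj:
  assumes Y: "oriented_descartes Y" and "supp (Y i) = supp (Y j)" shows "i = j"
proof (rule ccontr)
  assume "i \<noteq> j"
  have W: "descartes_matrix (Wmat Y)" using oriented_descartes_imp_descartes_matrix[OF Y] .
  obtain k l where d: "distinct [i, j, k, l]" using ex_distinct_4[OF \<open>i \<noteq> j\<close>] by blast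
  have "Y j = Y i \<or> Y j = orev (Y i)"
    using supp_eq_imp_eq_or_orev oriented_descartes_valid[OF Y] assms(2) by metis
  then show False
    using descartes_matrixD[OF W, of i j] descartes_matrixD[OF W, of i i]
      descartes_matrixD[OF W, of k j] descartes_matrixD[OF W, of k i] distinct_4_neq[OF d]
    by (auto simp: wcoord_orev lorentz_bilinear)
qed

lemma same_underlying_imp_relabel:
  assumes X: "oriented_descartes X" and Y: "oriented_descartes Y"
    and "underlying X = underlying Y"
  obtains s \<pi> where "bij \<pi>" "X = relabel s \<pi> Y"
proof -
  have "supp (X k) \<in> underlying X" for k
    by (simp add: underlying_def)
  then have "supp (X k) \<in> underlying Y" for k
    using assms(3) by simp
  then have "\<forall>k. \<exists>m. supp (X k) = supp (Y m)"
    by (auto simp: underlying_def)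
  then obtain \<pi> where \<pi>: "\<And>k. supp (X k) = supp (Y (\<pi> k))" by metis
  then have "inj \<pi>" using oriented_descartes_supp_inj[OF X] by (metis injI)
  then have "bij \<pi>" by (simp add: bij_def finite_UNIV_inj_surj)
  define \<epsilon> where "\<epsilon> k = (X k = Y (\<pi> k))" for k
  have alt: "X k = (if \<epsilon> k then Y (\<pi> k) else orev (Y (\<pi> k)))" for k
    using supp_eq_imp_eq_or_orev[OF oriented_descartes_valid[OF Y] oriented_descartes_valid[OF X] \<pi>]
    by (auto simp: \<epsilon>_def)
  have const: "\<epsilon> k = \<epsilon> 1" for k
  proof (cases "k = 1")
    case False
    then have "\<pi> 1 \<noteq> \<pi> k" using \<open>inj \<pi>\<close> by (metis inj_eq)
    then show ?thesis
      using False alt[of 1] alt[of k]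
        descartes_matrixD[OF oriented_descartes_imp_descartes_matrix[OF X], of 1 k]
        descartes_matrixD[OF oriented_descartes_imp_descartes_matrix[OF Y], of "\<pi> 1" "\<pi> k"]
      by (auto simp: wcoord_orev lorentz_bilinear split: if_splits)
  qed simp
  have "X k = relabel (\<epsilon> 1) \<pi> Y k" for k
    using alt[of k] const[of k] by (simp add: relabel_def)
  then have "X = relabel (\<epsilon> 1) \<pi> Y" by blast
  then show ?thesis using \<open>bij \<pi>\<close> that by blast
qed

lemma relabel_Sprod_imp_id:
  assumes Y: "oriented_descartes Y" and "Wmat (relabel s \<pi> Y) = Sprod l ** Wmat Y"
  shows "s \<and> \<pi> = id"
proof -
  have "(Sprod l ** Wmat Y) $ k = (if s then 1 else -1) *\<^sub>R Wmat Y $ (\<pi> k)" for k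
    using assms(2) wcoord_relabel by (metis Wmat_nth)
  then have "(if s then 1 else -1) = (1::real) \<and> \<pi> = id"
    by (rule Sprod_signed_permutation_imp_id[OF oriented_descartes_imp_descartes_matrix[OF Y], rotated])
      simp
  then show ?thesis by (simp split: if_splits)
qed

lemma relabel_inj:
  assumes D: "oriented_descartes D" and eq: "relabel s \<pi> D = relabel s' \<pi>' D"
  shows "s = s' \<and> \<pi> = \<pi>'"
proof -
  have "supp (D (\<pi> k)) = supp (D (\<pi>' k))" for k
    using arg_cong[OF fun_cong[OF eq, of k], of supp] by (simp add: relabel_def split: if_splits)
  then have "\<pi> = \<pi>'" using oriented_descartes_supp_inj[OF D] by blast
  moreover have "s = s'"
    using fun_cong[OF eq, of 1] orev_neq[OF oriented_descartes_valid[OF D]] \<open>\<pi> = \<pi>'\<close>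
    by (cases s; cases s') (auto simp: relabel_def dest: sym)
  ultimately show ?thesis by simp
qed

lemma F_orbit_underlying_inj:
  assumes D: "oriented_descartes D" shows "inj_on underlying (F_orbit D)"
proof (rule inj_onI)
  fix Y1 Y2 assume Y: "Y1 \<in> F_orbit D" "Y2 \<in> F_orbit D" and "underlying Y1 = underlying Y2"
  note od = F_orbit_oriented_descartes[OF D]
  obtain s \<pi> where "bij \<pi>" and Y2: "Y2 = relabel s \<pi> Y1"
    using same_underlying_imp_relabel[OF od[OF Y(2)] od[OF Y(1)]] \<open>underlying Y1 = underlying Y2\<close>
    by metis
  obtain l1 l2 where "Wmat Y1 = Sprod l1 ** Wmat D" "Wmat Y2 = Sprod l2 ** Wmat D"
    using F_orbit_Wmat Y by metis
  then have "Wmat (relabel s \<pi> Y1) = Sprod (l2 @ rev l1) ** Wmat Y1"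
    using Y2 by (simp add: Sprod_append Sprod_rev_cancel flip: matrix_mul_assoc)
  then have "s \<and> \<pi> = id"
    using relabel_Sprod_imp_id[OF od[OF Y(1)]] by blast
  then show "Y1 = Y2" using Y2 by simp
qed

section \<open>The orbits of the Apollonian group\<close>

lemma DD_eq_relabel:
  assumes D: "oriented_descartes D"
  shows "DD D = {relabel s \<pi> Y | s \<pi> Y. bij \<pi> \<and> Y \<in> F_orbit D}"
proof (intro set_eqI iffI)
  fix X assume "X \<in> DD D"
  then obtain Y where X: "oriented_descartes X" and "Y \<in> F_orbit D" "underlying X = underlying Y"
    by (auto simp: DD_def)
  then show "X \<in> {relabel s \<pi> Y | s \<pi> Y. bij \<pi> \<and> Y \<in> F_orbit D}"
    using same_underlying_imp_relabel[OF X F_orbit_oriented_descartes[OF D]] by blast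
next
  fix X assume "X \<in> {relabel s \<pi> Y | s \<pi> Y. bij \<pi> \<and> Y \<in> F_orbit D}"
  then obtain s \<pi> Y where "bij \<pi>" "Y \<in> F_orbit D" "X = relabel s \<pi> Y" by blast
  then show "X \<in> DD D"
    using oriented_descartes_relabel[OF F_orbit_oriented_descartes[OF D]] underlying_relabel
    by (auto simp: DD_def bij_def)
qed

lemma A_orbit_relabel:
  assumes D: "oriented_descartes D" and "bij \<pi>" and Y: "Y \<in> F_orbit D"
  shows "A_orbit (relabel s \<pi> Y) = relabel s \<pi> ` F_orbit D"
proof (intro set_eqI iffI)
  fix Z assume "Z \<in> A_orbit (relabel s \<pi> Y)"
  then obtain l where Z: "oriented_descartes Z" and "Wmat Z = Sprod l ** Wmat (relabel s \<pi> Y)"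
    by (auto simp: A_orbit_def apollonian_group_eq)
  moreover obtain Y' where Y': "Y' \<in> F_orbit D" "Wmat (relabel s \<pi> Y') = Sprod l ** Wmat (relabel s \<pi> Y)"
    using F_orbit_relabel_Sprod[OF D Y \<open>bij \<pi>\<close>] by blast
  moreover have "oriented_descartes (relabel s \<pi> Y')"
    using oriented_descartes_relabel[OF F_orbit_oriented_descartes[OF D Y'(1)]] \<open>bij \<pi>\<close>
    by (simp add: bij_is_inj)
  ultimately have "Z = relabel s \<pi> Y'"
    using Wmat_inj oriented_descartes_valid by metis
  then show "Z \<in> relabel s \<pi> ` F_orbit D" using Y'(1) by blast
next
  fix Z assume "Z \<in> relabel s \<pi> ` F_orbit D"
  then obtain Y' where Y': "Y' \<in> F_orbit D" and Z: "Z = relabel s \<pi> Y'" by blast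
  obtain l1 l2 where "Wmat Z = Sprod l1 ** Wmat (relabel s \<pi> D)"
      "Wmat (relabel s \<pi> Y) = Sprod l2 ** Wmat (relabel s \<pi> D)"
    using F_orbit_relabel_Wmat[OF _ \<open>bij \<pi>\<close>] Y Y' Z by metis
  then have "Wmat Z = Sprod (l1 @ rev l2) ** Wmat (relabel s \<pi> Y)"
    by (simp add: Sprod_append Sprod_rev_cancel flip: matrix_mul_assoc)
  moreover have "oriented_descartes Z"
    using oriented_descartes_relabel[OF F_orbit_oriented_descartes[OF D Y']] \<open>bij \<pi>\<close> Z
    by (simp add: bij_is_inj)
  ultimately show "Z \<in> A_orbit (relabel s \<pi> Y)"
    by (auto simp: A_orbit_def apollonian_group_eq)
qed

lemma A_orbit_image_DD:
  assumes D: "oriented_descartes D"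
  shows "A_orbit ` DD D = (\<lambda>(s, \<pi>). relabel s \<pi> ` F_orbit D) ` (UNIV \<times> {\<pi>. bij \<pi>})"
proof (intro set_eqI iffI)
  fix Q assume "Q \<in> A_orbit ` DD D"
  then obtain X where X: "X \<in> DD D" "Q = A_orbit X" by blast
  then obtain s \<pi> Y where "bij \<pi>" "Y \<in> F_orbit D" "X = relabel s \<pi> Y"
    using DD_eq_relabel[OF D] by blast
  then show "Q \<in> (\<lambda>(s, \<pi>). relabel s \<pi> ` F_orbit D) ` (UNIV \<times> {\<pi>. bij \<pi>})"
    using X(2) A_orbit_relabel[OF D] by force
next
  fix Q assume "Q \<in> (\<lambda>(s, \<pi>). relabel s \<pi> ` F_orbit D) ` (UNIV \<times> {\<pi>. bij \<pi>})"
  then obtain s \<pi> where "bij \<pi>" "Q = relabel s \<pi> ` F_orbit D" by auto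
  moreover have "relabel s \<pi> D \<in> DD D"
    using DD_eq_relabel[OF D] F_orbit_self \<open>bij \<pi>\<close> by blast
  ultimately show "Q \<in> A_orbit ` DD D"
    using A_orbit_relabel[OF D _ F_orbit_self] by blast
qed

lemma inj_on_relabel_F_orbit:
  assumes D: "oriented_descartes D"
  shows "inj_on (\<lambda>(s, \<pi>). relabel s \<pi> ` F_orbit D) (UNIV \<times> {\<pi>. bij \<pi>})"
proof (rule inj_onI, clarsimp)
  fix s \<pi> s' \<pi>'
  assume "bij \<pi>" "bij \<pi>'" and eq: "relabel s \<pi> ` F_orbit D = relabel s' \<pi>' ` F_orbit D"
  then obtain Y where Y: "Y \<in> F_orbit D" and DY: "relabel s \<pi> D = relabel s' \<pi>' Y"
    using F_orbit_self by blast
  then have "underlying Y = underlying D"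
    using underlying_relabel \<open>bij \<pi>\<close> \<open>bij \<pi>'\<close> by (metis bij_is_surj)
  then have "Y = D"
    using inj_onD[OF F_orbit_underlying_inj[OF D]] Y F_orbit_self by blast
  then show "s = s' \<and> \<pi> = \<pi>'" using relabel_inj[OF D] DY by blast
qed

lemma card_bij_4: "card {\<pi> :: 4 \<Rightarrow> 4. bij \<pi>} = 24"
proof -
  have "{\<pi> :: 4 \<Rightarrow> 4. bij \<pi>} = {p. p permutes UNIV}" by (simp add: permutes_univ bij_iff)
  moreover have "card {p :: 4 \<Rightarrow> 4. p permutes UNIV} = fact 4"
    by (rule card_permutations) simp_all
  ultimately show ?thesis by (simp add: fact_numeral)
qed

lemma card_A_orbit_DD: "oriented_descartes D \<Longrightarrow> card (A_orbit ` DD D) = 48"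
  by (simp add: A_orbit_image_DD card_image inj_on_relabel_F_orbit card_cartesian_product card_bij_4)

lemma DD_Apollonian_invariant:
  assumes D: "oriented_descartes D" and "D1 \<in> DD D" "U \<in> apollonian_group"
  shows "\<exists>D2 \<in> DD D. Wmat D2 = U ** Wmat D1"
proof -
  obtain s \<pi> Y where "bij \<pi>" "Y \<in> F_orbit D" "D1 = relabel s \<pi> Y"
    using DD_eq_relabel[OF D] assms(2) by blast
  moreover obtain l where "U = Sprod l" using assms(3) by (auto simp: apollonian_group_eq)
  ultimately show ?thesis
    using F_orbit_relabel_Sprod[OF D] DD_eq_relabel[OF D] by blast
qed

lemma Union_A_orbit_DD:
  assumes D: "oriented_descartes D" shows "\<Union> (A_orbit ` DD D) = DD D"
proof
  show "\<Union> (A_orbit ` DD D) \<subseteq> DD D"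
    using A_orbit_image_DD[OF D] DD_eq_relabel[OF D] by auto
  show "DD D \<subseteq> \<Union> (A_orbit ` DD D)"
  proof
    fix X assume "X \<in> DD D"
    then obtain s \<pi> Y where "bij \<pi>" "Y \<in> F_orbit D" "X = relabel s \<pi> Y"
      using DD_eq_relabel[OF D] by blast
    then have "X \<in> A_orbit X" using A_orbit_relabel[OF D] by blast
    then show "X \<in> \<Union> (A_orbit ` DD D)" using \<open>X \<in> DD D\<close> by blast
  qed
qed

lemma A_orbit_DD_unique_underlying:
  assumes D: "oriented_descartes D"
    and "Orb \<in> A_orbit ` DD D" "X \<in> underlying ` F_orbit D"
  shows "\<exists>!D2 \<in> Orb. underlying D2 = X"
proof -
  obtain s \<pi> where "bij \<pi>" and Orb: "Orb = relabel s \<pi> ` F_orbit D"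
    using assms(2) A_orbit_image_DD[OF D] by auto
  then have und: "underlying (relabel s \<pi> Y) = underlying Y" for Y
    using underlying_relabel bij_is_surj by blast
  obtain Y0 where Y0: "Y0 \<in> F_orbit D" "X = underlying Y0" using assms(3) by blast
  show ?thesis
  proof (rule ex1I[of _ "relabel s \<pi> Y0"])
    show "relabel s \<pi> Y0 \<in> Orb \<and> underlying (relabel s \<pi> Y0) = X"
      using Orb Y0 und by simp
    fix Z assume "Z \<in> Orb \<and> underlying Z = X"
    then obtain Y where "Y \<in> F_orbit D" "Z = relabel s \<pi> Y" "underlying Y = underlying Y0"
      using Orb Y0 und by auto
    then show "Z = relabel s \<pi> Y0"
      using inj_onD[OF F_orbit_underlying_inj[OF D]] Y0(1) by metis
  qed
qed

theorem theorem4p3: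
  fixes D :: config
  assumes "positively_oriented D"
  shows "(\<forall>D1 \<in> DD D. \<forall>U \<in> apollonian_group. \<exists>D2 \<in> DD D. Wmat D2 = U ** Wmat D1)
       \<and> card (A_orbit ` DD D) = 48
       \<and> \<Union> (A_orbit ` DD D) = DD D
       \<and> (\<forall>Orb \<in> A_orbit ` DD D. \<forall>X \<in> underlying ` F_orbit D. \<exists>!D2 \<in> Orb. underlying D2 = X)"
proof -
  have D: "oriented_descartes D"
    using assms by (simp add: positively_oriented_def oriented_descartes_def)
  show ?thesis
    using DD_Apollonian_invariant[OF D] card_A_orbit_DD[OF D] Union_A_orbit_DD[OF D]
      A_orbit_DD_unique_underlying[OF D] by blast
qed

end
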